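(* For every $r, d \ge 0$, the first-order theory of $\mathrm{TM}_r(d)$ equals the first-order theory of $\mathrm{TM}^{\mathrm{fin}}_r(d)$, and the MSO theory of $\mathrm{TM}_r(d)$ equals the MSO theory of $\mathrm{TM}^{\mathrm{fin}}_r(d)$.
   Context: Graphs are simple undirected graphs of arbitrary cardinality. A tree model of $r$ labels and height $d$ is a pair $(t,S)$ where $t$ is an $(r+1)$-labeled rooted tree (a tree with a distinguished root whose nodes are partitioned into label classes $P_1,\dots,P_{r+1}$, possibly infinite) and $S \subseteq [r]^2\times[d]$ such that: every root-to-leaf path has length exactly $d$; leaves are labeled from $[r]$ and internal nodes with $r+1$; $(i,j,l)\in S$ iff $(j,i,l)\in S$. It is a tree model of the graph whose vertices are the leaves of $t$, two leaves with labels $i,j$ at distance $2l$ in $t$ being adjacent iff $(i,j,l)\in S$. $\mathrm{TM}_r(d)$ is the class of all graphs isomorphic to a graph having such a tree model, and $\mathrm{TM}^{\mathrm{fin}}_r(d)$ is the class of finite graphs in $\mathrm{TM}_r(d)$. For a logic $\mathcal{L}\in\{\mathrm{FO},\mathrm{MSO}\}$ and a class $\mathcal{C}$ of graphs, the $\mathcal{L}$ theory of $\mathcal{C}$ is the set of all $\mathcal{L}$ sentences (over the vocabulary $\{E\}$) true in every graph of $\mathcal{C}$. *)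

theory Defs
  imports Main
begin

definition is_graph :: "'a set \<Rightarrow> ('a \<Rightarrow> 'a \<Rightarrow> bool) \<Rightarrow> bool" where
  "is_graph V E \<longleftrightarrow>
     (\<forall>x y. E x y \<longrightarrow> x \<in> V \<and> y \<in> V) \<and>
     (\<forall>x y. E x y \<longrightarrow> E y x) \<and>
     (\<forall>x. \<not> E x x)"

definition tm_child :: "'n set \<Rightarrow> 'n \<Rightarrow> ('n \<Rightarrow> 'n) \<Rightarrow> 'n \<Rightarrow> 'n \<Rightarrow> bool" where
  "tm_child N rt par w v \<longleftrightarrow> w \<in> N \<and> w \<noteq> rt \<and> par w = v"

definition tm_leaf :: "'n set \<Rightarrow> 'n \<Rightarrow> ('n \<Rightarrow> 'n) \<Rightarrow> 'n \<Rightarrow> bool" where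
  "tm_leaf N rt par v \<longleftrightarrow> v \<in> N \<and> \<not> (\<exists>w. tm_child N rt par w v)"

definition tm_leaves :: "'n set \<Rightarrow> 'n \<Rightarrow> ('n \<Rightarrow> 'n) \<Rightarrow> 'n set" where
  "tm_leaves N rt par = {v. tm_leaf N rt par v}"

definition is_tree_model ::
  "nat \<Rightarrow> nat \<Rightarrow> 'n set \<Rightarrow> 'n \<Rightarrow> ('n \<Rightarrow> 'n) \<Rightarrow> ('n \<Rightarrow> nat) \<Rightarrow> ('n \<Rightarrow> nat)
     \<Rightarrow> (nat \<times> nat \<times> nat) set \<Rightarrow> bool" where
  "is_tree_model r d N rt par dep lab S \<longleftrightarrow>
     rt \<in> N \<and> dep rt = 0 \<and>
     (\<forall>v\<in>N. v \<noteq> rt \<longrightarrow> par v \<in> N \<and> dep v = Suc (dep (par v))) \<and>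
     (\<forall>v\<in>N. dep v \<le> d) \<and>
     (\<forall>v. tm_leaf N rt par v \<longrightarrow> dep v = d) \<and>
     (\<forall>v. tm_leaf N rt par v \<longrightarrow> lab v \<in> {1..r}) \<and>
     (\<forall>v\<in>N. \<not> tm_leaf N rt par v \<longrightarrow> lab v = r + 1) \<and>
     S \<subseteq> {1..r} \<times> {1..r} \<times> {1..d} \<and>
     (\<forall>i j l. (i, j, l) \<in> S \<longleftrightarrow> (j, i, l) \<in> S)"

definition tm_leaf_dist :: "('n \<Rightarrow> 'n) \<Rightarrow> 'n \<Rightarrow> 'n \<Rightarrow> nat" where
  "tm_leaf_dist par u v = 2 * (LEAST k. (par ^^ k) u = (par ^^ k) v)"

definition tm_adj :: "('n \<Rightarrow> 'n) \<Rightarrow> ('n \<Rightarrow> nat) \<Rightarrow> (nat \<times> nat \<times> nat) set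
     \<Rightarrow> 'n \<Rightarrow> 'n \<Rightarrow> bool" where
  "tm_adj par lab S u v \<longleftrightarrow>
     (\<exists>l. tm_leaf_dist par u v = 2 * l \<and> (lab u, lab v, l) \<in> S)"

text \<open>Tree nodes
are taken from the type 'a \<times> nat, which is large enough: a tree model of
height d whose leaf set has the cardinality of V has at most |V|*(d+1) nodes.\<close>

definition in_TM :: "nat \<Rightarrow> nat \<Rightarrow> 'a set \<Rightarrow> ('a \<Rightarrow> 'a \<Rightarrow> bool) \<Rightarrow> bool" where
  "in_TM r d V E \<longleftrightarrow> is_graph V E \<and>
     (\<exists>(N :: ('a \<times> nat) set) rt par dep lab S f.
        is_tree_model r d N rt par dep lab S \<and>
        bij_betw f (tm_leaves N rt par) V \<and>
        (\<forall>u \<in> tm_leaves N rt par. \<forall>v \<in> tm_leaves N rt par.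
            E (f u) (f v) \<longleftrightarrow> tm_adj par lab S u v))"

datatype form =
    FEq nat nat
  | FEdge nat nat
  | FMem nat nat
  | FNeg form
  | FConj form form
  | FEx nat form
  | FExSet nat form

fun fv1 :: "form \<Rightarrow> nat set" where
  "fv1 (FEq i j) = {i, j}"
| "fv1 (FEdge i j) = {i, j}"
| "fv1 (FMem i j) = {i}"
| "fv1 (FNeg p) = fv1 p"
| "fv1 (FConj p q) = fv1 p \<union> fv1 q"
| "fv1 (FEx i p) = fv1 p - {i}"
| "fv1 (FExSet i p) = fv1 p"

fun fv2 :: "form \<Rightarrow> nat set" where
  "fv2 (FEq i j) = {}"
| "fv2 (FEdge i j) = {}"
| "fv2 (FMem i j) = {j}"
| "fv2 (FNeg p) = fv2 p"
| "fv2 (FConj p q) = fv2 p \<union> fv2 q"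
| "fv2 (FEx i p) = fv2 p"
| "fv2 (FExSet i p) = fv2 p - {i}"

fun is_fo :: "form \<Rightarrow> bool" where
  "is_fo (FEq i j) = True"
| "is_fo (FEdge i j) = True"
| "is_fo (FMem i j) = False"
| "is_fo (FNeg p) = is_fo p"
| "is_fo (FConj p q) = (is_fo p \<and> is_fo q)"
| "is_fo (FEx i p) = is_fo p"
| "is_fo (FExSet i p) = False"

fun sat :: "'a set \<Rightarrow> ('a \<Rightarrow> 'a \<Rightarrow> bool) \<Rightarrow> (nat \<Rightarrow> 'a) \<Rightarrow> (nat \<Rightarrow> 'a set)
              \<Rightarrow> form \<Rightarrow> bool" where
  "sat V E \<sigma> \<tau> (FEq i j) = (\<sigma> i = \<sigma> j)"
| "sat V E \<sigma> \<tau> (FEdge i j) = E (\<sigma> i) (\<sigma> j)"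
| "sat V E \<sigma> \<tau> (FMem i j) = (\<sigma> i \<in> \<tau> j)"
| "sat V E \<sigma> \<tau> (FNeg p) = (\<not> sat V E \<sigma> \<tau> p)"
| "sat V E \<sigma> \<tau> (FConj p q) = (sat V E \<sigma> \<tau> p \<and> sat V E \<sigma> \<tau> q)"
| "sat V E \<sigma> \<tau> (FEx i p) = (\<exists>x\<in>V. sat V E (\<sigma>(i := x)) \<tau> p)"
| "sat V E \<sigma> \<tau> (FExSet i p) = (\<exists>X. X \<subseteq> V \<and> sat V E \<sigma> (\<tau>(i := X)) p)"

definition mso_sentence :: "form \<Rightarrow> bool" where
  "mso_sentence p \<longleftrightarrow> fv1 p = {} \<and> fv2 p = {}"

definition fo_sentence :: "form \<Rightarrow> bool" where
  "fo_sentence p \<longleftrightarrow> is_fo p \<and> mso_sentence p"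

text \<open>Truth of a sentence in a graph (the assignments are irrelevant).\<close>

definition holds :: "'a set \<Rightarrow> ('a \<Rightarrow> 'a \<Rightarrow> bool) \<Rightarrow> form \<Rightarrow> bool" where
  "holds V E p \<longleftrightarrow> sat V E (\<lambda>_. undefined) (\<lambda>_. {}) p"

end

theory Submission
  imports Defs "HOL-Library.Disjoint_Sets"
begin

text \<open>
  A graph in \<open>TM\<^sub>r(d)\<close> is the set of leaves of a labelled tree of height \<open>d\<close>, two leaves being
  adjacent depending only on their labels and on the height of their lowest common ancestor.
  After replacing individual variables by singleton set variables, an MSO formula only speaks
  about sets of leaves. Colour each leaf by its label and by the set variables containing it,
  and give every node a type with threshold \<open>m\<close>: a leaf has its colour as type, an inner node
  the numbers of its children of each type, counted only up to \<open>m\<close>. There are finitely many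
  types, and if two roots have the same type for a threshold large enough with respect to the
  quantifier rank, Duplicator answers every set move while keeping the types equal for a
  smaller threshold, so the two leaf graphs satisfy the same formulas. Keeping below every node
  at most \<open>m\<close> children of each type prunes the tree to a finite one with the same root type,
  whose leaves span a finite graph in \<open>TM\<^sub>r(d)\<close> satisfying the same sentence.
\<close>

section \<open>Counting up to a threshold\<close>

definition capped_card :: "nat \<Rightarrow> 'a set \<Rightarrow> nat" where
  "capped_card m A = (if finite A then min m (card A) else m)"

lemma capped_card_le: "capped_card m A \<le> m"
  by (simp add: capped_card_def)

lemma capped_card_empty [simp]: "capped_card m {} = 0"
  by (simp add: capped_card_def)

lemma capped_card_less_iff: "capped_card m A < m \<longleftrightarrow> finite A \<and> card A < m"
  by (auto simp: capped_card_def)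

lemma capped_card_pos_iff: "1 \<le> m \<Longrightarrow> 0 < capped_card m A \<longleftrightarrow> A \<noteq> {}"
  by (auto simp: capped_card_def card_gt_0_iff)

lemma capped_card_eq_nonempty:
  assumes "1 \<le> m" "capped_card m A = capped_card m B" "A \<noteq> {}"
  shows "B \<noteq> {}"
  using capped_card_pos_iff[OF assms(1), of A] capped_card_pos_iff[OF assms(1), of B] assms(2,3) by simp

lemma two_le_capped_card_iff:
  assumes "2 \<le> m"
  shows "2 \<le> capped_card m A \<longleftrightarrow> (\<exists>a\<in>A. \<exists>b\<in>A. a \<noteq> b)"
proof -
  have "2 \<le> capped_card m A \<longleftrightarrow> \<not> (finite A \<and> card A \<le> 1)"
    using assms by (auto simp: capped_card_def)
  also have "\<dots> \<longleftrightarrow> (\<exists>a\<in>A. \<exists>b\<in>A. a \<noteq> b)"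
    by (metis card_le_Suc0_iff_eq One_nat_def finite.emptyI finite_insert insertI1 insert_absorb
        singletonD subsetI subset_singleton_iff)
  finally show ?thesis .
qed

lemma capped_card_mono: "A \<subseteq> B \<Longrightarrow> capped_card m A \<le> capped_card m B"
  unfolding capped_card_def by (auto intro: min.coboundedI2 card_mono dest: finite_subset)

lemma capped_card_image: "inj_on h A \<Longrightarrow> capped_card m (h ` A) = capped_card m A"
  by (simp add: capped_card_def card_image finite_image_iff)

lemma capped_card_Un_disjoint:
  "A \<inter> B = {} \<Longrightarrow> capped_card m (A \<union> B) = min m (capped_card m A + capped_card m B)"
  by (auto simp: capped_card_def card_Un_disjoint)

lemma capped_card_UN_disjoint_cong:
  assumes "finite W"
    and "disjoint_family_on P W" and "disjoint_family_on Q W"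
    and "\<And>w. w \<in> W \<Longrightarrow> capped_card m (P w) = capped_card m (Q w)"
  shows "capped_card m (\<Union>(P ` W)) = capped_card m (\<Union>(Q ` W))"
  using assms
proof (induction W rule: finite_induct)
  case (insert w W)
  have "P w \<inter> \<Union>(P ` W) = {}" "Q w \<inter> \<Union>(Q ` W) = {}"
    using insert.prems(1,2) insert.hyps(2) by (fastforce simp: disjoint_family_on_def)+
  moreover have "capped_card m (\<Union>(P ` W)) = capped_card m (\<Union>(Q ` W))"
    using insert.prems by (intro insert.IH) (auto simp: disjoint_family_on_def)
  ultimately show ?case
    using insert.prems(3) by (simp add: capped_card_Un_disjoint)
qed simp

lemma finite_subset_same_capped_card:
  "\<exists>R \<subseteq> A. finite R \<and> card R \<le> m \<and> capped_card m R = capped_card m A"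
proof (cases "finite A \<and> card A < m")
  case False
  then obtain R where "R \<subseteq> A" "finite R" "card R = m"
    by (metis infinite_arbitrarily_large not_less obtain_subset_with_card_n)
  with False show ?thesis
    by (intro exI[of _ R]) (auto simp: capped_card_def)
qed auto

lemma exists_inj_into_large_set:
  assumes "finite R" "card R \<le> m" "capped_card m B = m"
  obtains \<psi> where "inj_on \<psi> R" "\<psi> ` R \<subseteq> B"
proof -
  have "\<not> (finite B \<and> card B < card R)"
    using assms capped_card_less_iff[of m B] by auto
  then obtain B0 where "B0 \<subseteq> B" "finite B0" "card B0 = card R"
    by (metis infinite_arbitrarily_large not_less obtain_subset_with_card_n)
  then obtain \<psi> where "bij_betw \<psi> R B0"
    using assms(1) finite_same_card_bij by metis
  then show ?thesis
    using that \<open>B0 \<subseteq> B\<close> by (auto simp: bij_betw_def)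
qed

lemma finite_subsets_same_capped_card:
  "\<exists>R. \<forall>x. R x \<subseteq> F x \<and> finite (R x) \<and> card (R x) \<le> m \<and> capped_card m (R x) = capped_card m (F x)"
proof -
  have "\<exists>R. R \<subseteq> F x \<and> finite R \<and> card R \<le> m \<and> capped_card m R = capped_card m (F x)" for x
    using finite_subset_same_capped_card[of "F x" m] by blast
  then show ?thesis
    by (intro choice allI)
qed

lemma card_UN_le_mult:
  assumes "finite I" "card I \<le> T" "\<And>i. i \<in> I \<Longrightarrow> card (R i) \<le> m"
  shows "card (\<Union>(R ` I)) \<le> T * m"
proof -
  have "card (\<Union>(R ` I)) \<le> (\<Sum>i\<in>I. card (R i))"
    by (rule card_UN_le[OF assms(1)])
  also have "\<dots> \<le> card I * m"
    using sum_bounded_above[of I "\<lambda>i. card (R i)" m] assms(3) by simp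
  also have "\<dots> \<le> T * m"
    using assms(2) by simp
  finally show ?thesis .
qed

lemma exists_full_capped_fibre:
  assumes A: "capped_card m1 A = m1" and fin: "finite (g ` A)" "card (g ` A) \<le> T" and Tm: "T * m0 < m1"
  obtains \<delta> where "capped_card m0 {a\<in>A. g a = \<delta>} = m0"
proof -
  have "\<exists>\<delta>. capped_card m0 {a\<in>A. g a = \<delta>} = m0"
  proof (rule ccontr)
    assume "\<nexists>\<delta>. capped_card m0 {a\<in>A. g a = \<delta>} = m0"
    then have "capped_card m0 {a\<in>A. g a = \<delta>} < m0" for \<delta>
      using capped_card_le le_neq_implies_less by blast
    then have small: "finite {a\<in>A. g a = \<delta>}" "card {a\<in>A. g a = \<delta>} \<le> m0" for \<delta>
      using capped_card_less_iff less_imp_le by blast+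
    have A_UN: "A = (\<Union>\<delta> \<in> g ` A. {a\<in>A. g a = \<delta>})"
      by blast
    have "finite A"
      by (subst A_UN) (rule finite_UN_I[OF fin(1) small(1)])
    moreover have "card A \<le> T * m0"
      by (subst A_UN) (rule card_UN_le_mult[OF fin small(2)])
    ultimately show False
      using A Tm capped_card_less_iff[of m1 A] by simp
  qed
  then show ?thesis
    using that by blast
qed

text \<open>Representatives \<open>R \<delta>\<close> are matched injectively; everything else in \<open>B\<close> is sent to \<open>a0\<close>,
  whose fibre is full already.\<close>

lemma capped_fibres_extend_injection:
  assumes R: "\<And>\<delta>. R \<delta> \<subseteq> {a\<in>A. g a = \<delta>}" "\<And>\<delta>. capped_card m (R \<delta>) = capped_card m {a\<in>A. g a = \<delta>}"
    and \<psi>: "inj_on \<psi> (\<Union>(range R))" "\<psi> ` \<Union>(range R) \<subseteq> B"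
    and a0: "a0 \<in> A" "capped_card m {a\<in>A. g a = g a0} = m"
  defines "\<pi> \<equiv> \<lambda>b. if b \<in> \<psi> ` \<Union>(range R) then inv_into (\<Union>(range R)) \<psi> b else a0"
  shows "\<pi> ` B \<subseteq> A" "capped_card m {b\<in>B. g (\<pi> b) = \<delta>} = capped_card m {a\<in>A. g a = \<delta>}"
proof -
  have \<pi>_\<psi>: "\<pi> (\<psi> a) = a" if "a \<in> \<Union>(range R)" for a
    using that \<psi>(1) by (simp add: \<pi>_def)
  have RA: "\<Union>(range R) \<subseteq> A"
    using R(1) by blast
  have "\<pi> b \<in> A" for b
    using inv_into_into[of b \<psi> "\<Union>(range R)"] RA a0(1) by (auto simp: \<pi>_def)
  then show "\<pi> ` B \<subseteq> A"
    by blast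
  have inj: "inj_on \<psi> (R \<delta>)"
    using \<psi>(1) by (rule inj_on_subset) blast
  have lower: "\<psi> ` R \<delta> \<subseteq> {b\<in>B. g (\<pi> b) = \<delta>}"
    using R(1)[of \<delta>] \<psi>(2) \<pi>_\<psi> by fastforce
  show "capped_card m {b\<in>B. g (\<pi> b) = \<delta>} = capped_card m {a\<in>A. g a = \<delta>}"
  proof (cases "\<delta> = g a0")
    case True
    have "m = capped_card m (\<psi> ` R \<delta>)"
      using R(2)[of \<delta>] a0(2) True capped_card_image[OF inj] by simp
    also have "\<dots> \<le> capped_card m {b\<in>B. g (\<pi> b) = \<delta>}"
      by (rule capped_card_mono[OF lower])
    finally show ?thesis
      using capped_card_le a0(2) True by (metis le_antisym)
  next
    case False
    have "{b\<in>B. g (\<pi> b) = \<delta>} \<subseteq> \<psi> ` R \<delta>"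
    proof
      fix b assume b: "b \<in> {b\<in>B. g (\<pi> b) = \<delta>}"
      then have "b \<in> \<psi> ` \<Union>(range R)"
        using False by (auto simp: \<pi>_def split: if_splits)
      then obtain a \<delta>' where a: "a \<in> R \<delta>'" "b = \<psi> a"
        by blast
      then have "\<pi> b = a"
        using \<pi>_\<psi> by blast
      then have "\<delta>' = \<delta>"
        using a(1) b R(1)[of \<delta>'] by auto
      then show "b \<in> \<psi> ` R \<delta>"
        using a by blast
    qed
    then show ?thesis
      using lower R(2)[of \<delta>] capped_card_image[OF inj] by (metis subset_antisym)
  qed
qed

lemma capped_fibres_pullback_large:
  assumes A: "capped_card m1 A = m1" and B: "capped_card m1 B = m1"
    and fin: "finite (g ` A)" and T: "card (g ` A) \<le> T" and Tm: "T * m0 < m1" and m0: "1 \<le> m0"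
  shows "\<exists>\<pi>. \<pi> ` B \<subseteq> A \<and>
           (\<forall>\<delta>. capped_card m0 {b\<in>B. g (\<pi> b) = \<delta>} = capped_card m0 {a\<in>A. g a = \<delta>})"
proof -
  obtain R where "\<forall>\<delta>. R \<delta> \<subseteq> {a\<in>A. g a = \<delta>} \<and> finite (R \<delta>) \<and> card (R \<delta>) \<le> m0 \<and>
      capped_card m0 (R \<delta>) = capped_card m0 {a\<in>A. g a = \<delta>}"
    using finite_subsets_same_capped_card ..
  then have R: "\<And>\<delta>. R \<delta> \<subseteq> {a\<in>A. g a = \<delta>}" "\<And>\<delta>. finite (R \<delta>)" "\<And>\<delta>. card (R \<delta>) \<le> m0"
      "\<And>\<delta>. capped_card m0 (R \<delta>) = capped_card m0 {a\<in>A. g a = \<delta>}"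
    by blast+
  have RR: "\<Union>(range R) = \<Union>(R ` g ` A)"
    using R(1) by blast
  have "finite (\<Union>(range R))"
    unfolding RR by (rule finite_UN_I[OF fin R(2)])
  moreover have "card (\<Union>(range R)) \<le> T * m0"
    unfolding RR by (rule card_UN_le_mult[OF fin T R(3)])
  ultimately obtain \<psi> where \<psi>: "inj_on \<psi> (\<Union>(range R))" "\<psi> ` \<Union>(range R) \<subseteq> B"
    using exists_inj_into_large_set[OF _ _ B] Tm by (meson less_imp_le order_trans)
  obtain \<delta>0 where \<delta>0: "capped_card m0 {a\<in>A. g a = \<delta>0} = m0"
    using exists_full_capped_fibre[OF A fin T Tm] .
  then obtain a0 where "a0 \<in> A" "g a0 = \<delta>0"
    using m0 capped_card_pos_iff[of m0 "{a\<in>A. g a = \<delta>0}"] by auto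
  then show ?thesis
    using capped_fibres_extend_injection[OF R(1,4) \<psi>, of a0] \<delta>0 by blast
qed

text \<open>The counting core of Duplicator's answer to a set move among the children of a node: the
  children \<open>B\<close> on one side borrow the new types \<open>g\<close> from children in \<open>A\<close> on the other side.\<close>

lemma capped_fibres_pullback:
  assumes eq: "capped_card m1 A = capped_card m1 B"
    and fin: "finite (g ` A)" and T: "card (g ` A) \<le> T" and Tm: "T * m0 < m1" and m0: "1 \<le> m0"
  shows "\<exists>\<pi>. \<pi> ` B \<subseteq> A \<and>
           (\<forall>\<delta>. capped_card m0 {b\<in>B. g (\<pi> b) = \<delta>} = capped_card m0 {a\<in>A. g a = \<delta>})"
proof (cases "capped_card m1 A < m1")
  case True
  then have A: "finite A" "card A < m1"
    by (simp_all add: capped_card_less_iff)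
  moreover have B: "finite B" "card B < m1"
    using True eq capped_card_less_iff[of m1 B] by simp_all
  ultimately have "card B = card A"
    using eq by (simp add: capped_card_def)
  then obtain \<beta> where \<beta>: "bij_betw \<beta> B A"
    using finite_same_card_bij[OF B(1) A(1)] by blast
  then have \<beta>B: "\<beta> ` B = A"
    by (rule bij_betw_imp_surj_on)
  have "capped_card m0 {b\<in>B. g (\<beta> b) = \<delta>} = capped_card m0 {a\<in>A. g a = \<delta>}" for \<delta>
  proof -
    have "inj_on \<beta> {b\<in>B. g (\<beta> b) = \<delta>}"
      using bij_betw_imp_inj_on[OF \<beta>] by (rule inj_on_subset) blast
    then have "capped_card m0 {b\<in>B. g (\<beta> b) = \<delta>} = capped_card m0 (\<beta> ` {b\<in>B. g (\<beta> b) = \<delta>})"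
      by (simp add: capped_card_image)
    also have "\<beta> ` {b\<in>B. g (\<beta> b) = \<delta>} = {a\<in>A. g a = \<delta>}"
      using \<beta>B by auto
    finally show ?thesis .
  qed
  then show ?thesis
    using \<beta>B by blast
next
  case False
  then have "capped_card m1 A = m1" "capped_card m1 B = m1"
    using capped_card_le[of m1 A] eq by simp_all
  then show ?thesis
    using capped_fibres_pullback_large fin T Tm m0 by blast
qed

lemma capped_fibres_pullback_refined:
  assumes W: "finite W" "h1 ` A \<subseteq> W" "h2 ` B \<subseteq> W"
    and eq: "\<And>\<omega>. capped_card m1 {a\<in>A. h1 a = \<omega>} = capped_card m1 {b\<in>B. h2 b = \<omega>}"
    and fin: "finite (g ` A)" and T: "card (g ` A) \<le> T" and Tm: "T * m0 < m1" and m0: "1 \<le> m0"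
  shows "\<exists>\<pi>. (\<forall>b\<in>B. \<pi> b \<in> A \<and> h1 (\<pi> b) = h2 b) \<and>
           (\<forall>\<delta>. capped_card m0 {b\<in>B. g (\<pi> b) = \<delta>} = capped_card m0 {a\<in>A. g a = \<delta>})"
proof -
  let ?A = "\<lambda>\<omega>. {a\<in>A. h1 a = \<omega>}" and ?B = "\<lambda>\<omega>. {b\<in>B. h2 b = \<omega>}"
  have "\<forall>\<omega>. \<exists>\<pi>. \<pi> ` ?B \<omega> \<subseteq> ?A \<omega> \<and>
      (\<forall>\<delta>. capped_card m0 {b\<in>?B \<omega>. g (\<pi> b) = \<delta>} = capped_card m0 {a\<in>?A \<omega>. g a = \<delta>})"
  proof
    fix \<omega>
    have sub: "g ` ?A \<omega> \<subseteq> g ` A"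
      by blast
    show "\<exists>\<pi>. \<pi> ` ?B \<omega> \<subseteq> ?A \<omega> \<and>
      (\<forall>\<delta>. capped_card m0 {b\<in>?B \<omega>. g (\<pi> b) = \<delta>} = capped_card m0 {a\<in>?A \<omega>. g a = \<delta>})"
      using finite_subset[OF sub fin] card_mono[OF fin sub] T
      by (intro capped_fibres_pullback[OF eq _ _ Tm m0]) simp_all
  qed
  from choice[OF this] obtain P where "\<forall>\<omega>. P \<omega> ` ?B \<omega> \<subseteq> ?A \<omega> \<and>
      (\<forall>\<delta>. capped_card m0 {b\<in>?B \<omega>. g (P \<omega> b) = \<delta>} = capped_card m0 {a\<in>?A \<omega>. g a = \<delta>})"
    by (elim exE)
  then have P: "\<And>\<omega>. P \<omega> ` ?B \<omega> \<subseteq> ?A \<omega>"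
      "\<And>\<omega> \<delta>. capped_card m0 {b\<in>?B \<omega>. g (P \<omega> b) = \<delta>} = capped_card m0 {a\<in>?A \<omega>. g a = \<delta>}"
    by blast+
  define \<pi> where "\<pi> b = P (h2 b) b" for b
  have "\<pi> b \<in> A \<and> h1 (\<pi> b) = h2 b" if "b \<in> B" for b
    using P(1)[of "h2 b"] that by (auto simp: \<pi>_def)
  moreover have "capped_card m0 {b\<in>B. g (\<pi> b) = \<delta>} = capped_card m0 {a\<in>A. g a = \<delta>}" for \<delta>
  proof -
    have "{b\<in>B. g (\<pi> b) = \<delta>} = (\<Union>\<omega>\<in>W. {b\<in>?B \<omega>. g (P \<omega> b) = \<delta>})"
      using W(3) unfolding \<pi>_def by blast
    moreover have "{a\<in>A. g a = \<delta>} = (\<Union>\<omega>\<in>W. {a\<in>?A \<omega>. g a = \<delta>})"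
      using W(2) by blast
    moreover have "capped_card m0 (\<Union>\<omega>\<in>W. {b\<in>?B \<omega>. g (P \<omega> b) = \<delta>}) =
        capped_card m0 (\<Union>\<omega>\<in>W. {a\<in>?A \<omega>. g a = \<delta>})"
      by (rule capped_card_UN_disjoint_cong[OF W(1) _ _ P(2)]) (auto simp: disjoint_family_on_def)
    ultimately show ?thesis
      by simp
  qed
  ultimately show ?thesis
    by blast
qed

section \<open>Monadic second-order logic with set variables only\<close>

datatype sform = SSub nat nat | SEdge nat nat | SNeg sform | SConj sform sform | SEx nat sform

fun ssat :: "'a set \<Rightarrow> ('a \<Rightarrow> 'a \<Rightarrow> bool) \<Rightarrow> (nat \<Rightarrow> 'a set) \<Rightarrow> sform \<Rightarrow> bool" where
  "ssat V E \<tau> (SSub i j) \<longleftrightarrow> \<tau> i \<subseteq> \<tau> j"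
| "ssat V E \<tau> (SEdge i j) \<longleftrightarrow> (\<exists>a\<in>\<tau> i. \<exists>b\<in>\<tau> j. E a b)"
| "ssat V E \<tau> (SNeg p) \<longleftrightarrow> \<not> ssat V E \<tau> p"
| "ssat V E \<tau> (SConj p q) \<longleftrightarrow> ssat V E \<tau> p \<and> ssat V E \<tau> q"
| "ssat V E \<tau> (SEx i p) \<longleftrightarrow> (\<exists>X \<subseteq> V. ssat V E (\<tau>(i := X)) p)"

fun srank :: "sform \<Rightarrow> nat" where
  "srank (SSub i j) = 0"
| "srank (SEdge i j) = 0"
| "srank (SNeg p) = srank p"
| "srank (SConj p q) = max (srank p) (srank q)"
| "srank (SEx i p) = Suc (srank p)"

text \<open>Bound variables are included: the colours of leaves must record all of them.\<close>

fun svars :: "sform \<Rightarrow> nat set" where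
  "svars (SSub i j) = {i, j}"
| "svars (SEdge i j) = {i, j}"
| "svars (SNeg p) = svars p"
| "svars (SConj p q) = svars p \<union> svars q"
| "svars (SEx i p) = insert i (svars p)"

fun sfv :: "sform \<Rightarrow> nat set" where
  "sfv (SSub i j) = {i, j}"
| "sfv (SEdge i j) = {i, j}"
| "sfv (SNeg p) = sfv p"
| "sfv (SConj p q) = sfv p \<union> sfv q"
| "sfv (SEx i p) = sfv p - {i}"

lemma finite_svars: "finite (svars p)"
  by (induction p) auto

lemma ssat_cong: "\<forall>j\<in>sfv p. \<tau> j = \<tau>' j \<Longrightarrow> ssat V E \<tau> p \<longleftrightarrow> ssat V E \<tau>' p"
proof (induction p arbitrary: \<tau> \<tau>')
  case (SConj p q)
  have "ssat V E \<tau> p \<longleftrightarrow> ssat V E \<tau>' p" "ssat V E \<tau> q \<longleftrightarrow> ssat V E \<tau>' q"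
    by (rule SConj.IH(1), use SConj.prems in simp) (rule SConj.IH(2), use SConj.prems in simp)
  then show ?case
    by simp
next
  case (SEx i p)
  have "ssat V E (\<tau>(i := X)) p \<longleftrightarrow> ssat V E (\<tau>'(i := X)) p" for X
    by (rule SEx.IH) (use SEx.prems in simp)
  then show ?case
    by simp
qed simp_all

lemma ssat_bij:
  assumes f: "bij_betw f L V" and E: "\<forall>u\<in>L. \<forall>v\<in>L. E (f u) (f v) \<longleftrightarrow> A u v"
  shows "(\<And>j. \<tau> j \<subseteq> L) \<Longrightarrow> ssat V E (\<lambda>j. f ` \<tau> j) p \<longleftrightarrow> ssat L A \<tau> p"
proof (induction p arbitrary: \<tau>)
  case (SSub i j)
  have "f ` \<tau> i \<subseteq> f ` \<tau> j \<longleftrightarrow> \<tau> i \<subseteq> \<tau> j"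
    using inj_on_image_mem_iff[OF bij_betw_imp_inj_on[OF f]] SSub.prems by blast
  then show ?case
    by simp
next
  case (SEdge i j)
  then show ?case
    using E by (simp; blast)
next
  case (SEx i p)
  have upd: "(\<lambda>j. f ` (\<tau>(i := Y)) j) = (\<lambda>j. f ` \<tau> j)(i := f ` Y)" for Y
    by (simp add: fun_eq_iff)
  have "(\<exists>X \<subseteq> V. ssat V E ((\<lambda>j. f ` \<tau> j)(i := X)) p) \<longleftrightarrow> (\<exists>Y \<subseteq> L. ssat V E ((\<lambda>j. f ` \<tau> j)(i := f ` Y)) p)"
    using f by (metis bij_betw_def subset_image_iff)
  also have "\<dots> \<longleftrightarrow> (\<exists>Y \<subseteq> L. ssat L A (\<tau>(i := Y)) p)"
  proof -
    have "ssat V E ((\<lambda>j. f ` \<tau> j)(i := f ` Y)) p \<longleftrightarrow> ssat L A (\<tau>(i := Y)) p" if "Y \<subseteq> L" for Y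
    proof -
      have "ssat V E (\<lambda>j. f ` (\<tau>(i := Y)) j) p \<longleftrightarrow> ssat L A (\<tau>(i := Y)) p"
        by (rule SEx.IH) (use SEx.prems that in simp)
      then show ?thesis
        by (simp only: upd)
    qed
    then show ?thesis
      by blast
  qed
  finally show ?case
    by simp
qed simp_all

definition SEmpty :: "nat \<Rightarrow> nat \<Rightarrow> sform" where
  "SEmpty y z = SNeg (SEx z (SNeg (SSub y z)))"

definition SSingleton :: "nat \<Rightarrow> sform" where
  "SSingleton a = SConj (SNeg (SEmpty a (a + 3)))
     (SNeg (SEx (a + 2) (SConj (SSub (a + 2) a) (SConj (SNeg (SEmpty (a + 2) (a + 3))) (SNeg (SSub a (a + 2)))))))"

lemma ssat_SEmpty: "y \<noteq> z \<Longrightarrow> ssat V E \<tau> (SEmpty y z) \<longleftrightarrow> \<tau> y = {}"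
  unfolding SEmpty_def by auto

lemma ssat_SSingleton:
  assumes "\<tau> a \<subseteq> V"
  shows "ssat V E \<tau> (SSingleton a) \<longleftrightarrow> (\<exists>x\<in>V. \<tau> a = {x})"
proof -
  have "ssat V E \<tau> (SSingleton a) \<longleftrightarrow> \<tau> a \<noteq> {} \<and> \<not> (\<exists>Y \<subseteq> V. Y \<subseteq> \<tau> a \<and> Y \<noteq> {} \<and> \<not> \<tau> a \<subseteq> Y)"
    unfolding SSingleton_def by (simp add: ssat_SEmpty)
  also have "\<dots> \<longleftrightarrow> (\<exists>x\<in>V. \<tau> a = {x})"
  proof
    assume h: "\<tau> a \<noteq> {} \<and> \<not> (\<exists>Y \<subseteq> V. Y \<subseteq> \<tau> a \<and> Y \<noteq> {} \<and> \<not> \<tau> a \<subseteq> Y)"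
    then obtain x where x: "x \<in> \<tau> a"
      by blast
    have "\<tau> a \<subseteq> {x}"
    proof (rule ccontr)
      assume "\<not> \<tau> a \<subseteq> {x}"
      then have "{x} \<subseteq> V \<and> {x} \<subseteq> \<tau> a \<and> {x} \<noteq> {} \<and> \<not> \<tau> a \<subseteq> {x}"
        using x assms by blast
      then show False
        using h by blast
    qed
    then show "\<exists>x\<in>V. \<tau> a = {x}"
      using x assms by blast
  qed (auto simp: subset_singleton_iff)
  finally show ?thesis .
qed

lemma sfv_SSingleton: "sfv (SSingleton a) = {a}"
  unfolding SSingleton_def SEmpty_def by auto

text \<open>Individual variable \<open>i\<close> becomes the singleton-set variable \<open>4 * i\<close> and set variable
  \<open>j\<close> becomes \<open>4 * j + 1\<close>; the indices \<open>4 * i + 2\<close> and \<open>4 * i + 3\<close> are scratch variables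
  for expressing that \<open>4 * i\<close> denotes a singleton.\<close>

fun to_sform :: "form \<Rightarrow> sform" where
  "to_sform (FEq i j) = SSub (4 * i) (4 * j)"
| "to_sform (FEdge i j) = SEdge (4 * i) (4 * j)"
| "to_sform (FMem i j) = SSub (4 * i) (4 * j + 1)"
| "to_sform (FNeg p) = SNeg (to_sform p)"
| "to_sform (FConj p q) = SConj (to_sform p) (to_sform q)"
| "to_sform (FEx i p) = SEx (4 * i) (SConj (SSingleton (4 * i)) (to_sform p))"
| "to_sform (FExSet j p) = SEx (4 * j + 1) (to_sform p)"

definition encode_assignment :: "(nat \<Rightarrow> 'a) \<Rightarrow> (nat \<Rightarrow> 'a set) \<Rightarrow> nat \<Rightarrow> 'a set" where
  "encode_assignment \<sigma> \<tau> n =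
     (if n mod 4 = 0 then {\<sigma> (n div 4)} else if n mod 4 = 1 then \<tau> (n div 4) else {})"

lemma encode_assignment_individual [simp]: "encode_assignment \<sigma> \<tau> (4 * i) = {\<sigma> i}"
  by (simp add: encode_assignment_def)

lemma encode_assignment_set [simp]: "encode_assignment \<sigma> \<tau> (Suc (4 * j)) = \<tau> j"
proof -
  have "Suc (4 * j) mod 4 = 1" "Suc (4 * j) div 4 = j"
    by presburger+
  then show ?thesis
    by (simp add: encode_assignment_def)
qed

lemma encode_assignment_upd_individual:
  "(encode_assignment \<sigma> \<tau>)(4 * i := {x}) = encode_assignment (\<sigma>(i := x)) \<tau>"
proof
  fix n
  show "((encode_assignment \<sigma> \<tau>)(4 * i := {x})) n = encode_assignment (\<sigma>(i := x)) \<tau> n"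
  proof (cases "n = 4 * i")
    case False
    then have "n mod 4 = 0 \<Longrightarrow> n div 4 \<noteq> i"
      by presburger
    then show ?thesis
      using False by (simp add: encode_assignment_def)
  qed simp
qed

lemma encode_assignment_upd_set:
  "(encode_assignment \<sigma> \<tau>)(4 * j + 1 := X) = encode_assignment \<sigma> (\<tau>(j := X))"
proof
  fix n
  show "((encode_assignment \<sigma> \<tau>)(4 * j + 1 := X)) n = encode_assignment \<sigma> (\<tau>(j := X)) n"
  proof (cases "n = 4 * j + 1")
    case False
    then have "n mod 4 = 1 \<Longrightarrow> n div 4 \<noteq> j"
      by presburger
    then show ?thesis
      using False by (simp add: encode_assignment_def)
  qed simp
qed

lemma ssat_to_sform: "ssat V E (encode_assignment \<sigma> \<tau>) (to_sform p) \<longleftrightarrow> sat V E \<sigma> \<tau> p"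
proof (induction p arbitrary: \<sigma> \<tau>)
  case (FEx i p)
  let ?e = "encode_assignment \<sigma> \<tau>"
  have "ssat V E (?e(4 * i := X)) (SSingleton (4 * i)) \<longleftrightarrow> (\<exists>x\<in>V. X = {x})" if "X \<subseteq> V" for X
    using ssat_SSingleton[of "?e(4 * i := X)" "4 * i" V] that by simp
  then have "ssat V E ?e (to_sform (FEx i p)) \<longleftrightarrow>
      (\<exists>X \<subseteq> V. (\<exists>x\<in>V. X = {x}) \<and> ssat V E (?e(4 * i := X)) (to_sform p))"
    by auto
  also have "\<dots> \<longleftrightarrow> (\<exists>x\<in>V. ssat V E (?e(4 * i := {x})) (to_sform p))"
    by blast
  also have "\<dots> \<longleftrightarrow> (\<exists>x\<in>V. sat V E (\<sigma>(i := x)) \<tau> p)"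
    by (simp only: encode_assignment_upd_individual FEx.IH)
  finally show ?case
    by simp
next
  case (FExSet j p)
  show ?case
    by (simp only: to_sform.simps ssat.simps sat.simps encode_assignment_upd_set FExSet.IH)
qed simp_all

lemma sfv_to_sform: "sfv (to_sform p) \<subseteq> (\<lambda>i. 4 * i) ` fv1 p \<union> (\<lambda>j. 4 * j + 1) ` fv2 p"
  by (induction p) (auto simp: sfv_SSingleton)

lemma holds_iff_ssat:
  assumes "mso_sentence p"
  shows "holds V E p \<longleftrightarrow> ssat V E (\<lambda>_. {}) (to_sform p)"
proof -
  have closed: "sfv (to_sform p) = {}"
    using sfv_to_sform[of p] assms by (simp add: mso_sentence_def)
  show ?thesis
    unfolding holds_def ssat_to_sform[symmetric] by (rule ssat_cong) (simp add: closed)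
qed

section \<open>Types of labelled trees\<close>

lemma tm_adj_self: "tm_adj par lab S a a \<longleftrightarrow> (lab a, lab a, 0) \<in> S"
  unfolding tm_adj_def tm_leaf_dist_def by simp

lemma tm_adj_meet:
  assumes "(par ^^ k) a \<noteq> (par ^^ k) b" "(par ^^ Suc k) a = (par ^^ Suc k) b"
  shows "tm_adj par lab S a b \<longleftrightarrow> (lab a, lab b, Suc k) \<in> S"
proof -
  have "(LEAST j. (par ^^ j) a = (par ^^ j) b) = Suc k"
  proof (rule Least_equality)
    fix j assume j: "(par ^^ j) a = (par ^^ j) b"
    show "Suc k \<le> j"
    proof (rule ccontr)
      assume "\<not> Suc k \<le> j"
      then have "k = (k - j) + j"
        by simp
      then have "(par ^^ k) x = (par ^^ (k - j)) ((par ^^ j) x)" for x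
        by (metis comp_apply funpow_add)
      then have "(par ^^ k) a = (par ^^ k) b"
        using j by simp
      then show False
        using assms(1) by simp
    qed
  qed (rule assms(2))
  then show ?thesis
    unfolding tm_adj_def tm_leaf_dist_def by (auto simp del: mult_Suc_right)
qed

text \<open>A node of the tree with node set \<open>N\<close>, whose leaves are coloured by the set assignment \<open>\<tau>\<close>.\<close>

type_synonym 'n pointed_tree = "('n set \<times> (nat \<Rightarrow> 'n set)) \<times> 'n"

text \<open>The parent, depth and label functions of a tree model are fixed, while the node set varies:
  pruning produces subtrees. Colours record membership in the set variables below \<open>K\<close>.\<close>

locale labelled_tree =
  fixes par :: "'n \<Rightarrow> 'n" and rt :: 'n and dep :: "'n \<Rightarrow> nat" and lab :: "'n \<Rightarrow> nat"
    and d r K :: nat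
begin

definition children :: "'n set \<Rightarrow> 'n \<Rightarrow> 'n set" where
  "children N v = {w \<in> N. w \<noteq> rt \<and> par w = v}"

definition wf_tree :: "'n set \<Rightarrow> bool" where
  "wf_tree N \<longleftrightarrow> rt \<in> N \<and> dep rt = 0 \<and>
     (\<forall>v\<in>N. v \<noteq> rt \<longrightarrow> par v \<in> N \<and> dep v = Suc (dep (par v))) \<and>
     (\<forall>v\<in>N. dep v \<le> d) \<and> (\<forall>v\<in>N. dep v < d \<longrightarrow> children N v \<noteq> {}) \<and>
     (\<forall>v\<in>N. dep v = d \<longrightarrow> lab v \<le> r)"

definition at_height :: "'n set \<Rightarrow> nat \<Rightarrow> 'n \<Rightarrow> bool" where
  "at_height N k v \<longleftrightarrow> v \<in> N \<and> dep v + k = d"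

definition leaves_under :: "'n set \<Rightarrow> nat \<Rightarrow> 'n \<Rightarrow> 'n set" where
  "leaves_under N k v = {a \<in> N. dep a = d \<and> (par ^^ k) a = v}"

lemma wf_treeD:
  assumes "wf_tree N"
  shows "rt \<in> N" "dep rt = 0"
    and "\<And>v. v \<in> N \<Longrightarrow> v \<noteq> rt \<Longrightarrow> par v \<in> N"
    and "\<And>v. v \<in> N \<Longrightarrow> v \<noteq> rt \<Longrightarrow> dep v = Suc (dep (par v))"
    and "\<And>v. v \<in> N \<Longrightarrow> dep v \<le> d"
    and "\<And>v. v \<in> N \<Longrightarrow> dep v < d \<Longrightarrow> children N v \<noteq> {}"
    and "\<And>v. v \<in> N \<Longrightarrow> dep v = d \<Longrightarrow> lab v \<le> r"
  using assms by (simp_all add: wf_tree_def)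

lemma ancestor_in_tree:
  assumes "wf_tree N" "a \<in> N" "j \<le> dep a"
  shows "(par ^^ j) a \<in> N \<and> dep ((par ^^ j) a) = dep a - j"
  using assms(3)
proof (induction j)
  case (Suc j)
  then have "(par ^^ j) a \<in> N" "dep ((par ^^ j) a) = dep a - j" "(par ^^ j) a \<noteq> rt"
    using assms(1) by (auto simp: wf_tree_def)
  then show ?case
    using assms(1) by (auto simp: wf_tree_def)
qed (use assms in simp)

lemma in_childrenD:
  assumes "wf_tree N" "w \<in> children N v"
  shows "w \<in> N" "par w = v" "v \<in> N" "dep w = Suc (dep v)"
  using assms by (auto simp: wf_tree_def children_def)

lemma at_height_child:
  "wf_tree N \<Longrightarrow> at_height N (Suc k) v \<Longrightarrow> w \<in> children N v \<Longrightarrow> at_height N k w"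
  using in_childrenD[of N w v] by (auto simp: at_height_def)

lemma at_height_root: "wf_tree N \<Longrightarrow> at_height N d rt"
  by (simp add: wf_tree_def at_height_def)

lemma leaves_under_0: "at_height N 0 v \<Longrightarrow> leaves_under N 0 v = {v}"
  by (auto simp: leaves_under_def at_height_def)

lemma leaves_under_Suc:
  assumes "wf_tree N" "at_height N (Suc k) v"
  shows "leaves_under N (Suc k) v = (\<Union>w\<in>children N v. leaves_under N k w)"
proof (intro equalityI subsetI)
  fix a assume "a \<in> leaves_under N (Suc k) v"
  then have a: "a \<in> N" "dep a = d" "par ((par ^^ k) a) = v"
    by (auto simp: leaves_under_def)
  moreover have "(par ^^ k) a \<in> N" "dep ((par ^^ k) a) = d - k"
    using ancestor_in_tree[OF assms(1) a(1), of k] a assms(2) by (auto simp: at_height_def)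
  moreover have "(par ^^ k) a \<noteq> rt"
    using \<open>dep ((par ^^ k) a) = d - k\<close> assms by (auto simp: wf_tree_def at_height_def)
  ultimately show "a \<in> (\<Union>w\<in>children N v. leaves_under N k w)"
    by (auto simp: children_def leaves_under_def)
qed (auto simp: leaves_under_def children_def)

lemma leaves_under_child_subset:
  "wf_tree N \<Longrightarrow> at_height N (Suc k) v \<Longrightarrow> w \<in> children N v \<Longrightarrow>
    leaves_under N k w \<subseteq> leaves_under N (Suc k) v"
  using leaves_under_Suc by blast

lemma leaves_under_disjoint: "w1 \<noteq> w2 \<Longrightarrow> leaves_under N k w1 \<inter> leaves_under N k w2 = {}"
  by (auto simp: leaves_under_def)

lemma leaves_under_root:
  assumes "wf_tree N"
  shows "leaves_under N d rt = {a \<in> N. dep a = d}"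
proof (intro equalityI subsetI)
  fix a assume "a \<in> {a \<in> N. dep a = d}"
  then have a: "a \<in> N" "dep a = d"
    by auto
  then have "(par ^^ d) a \<in> N" "dep ((par ^^ d) a) = 0"
    using ancestor_in_tree[OF assms a(1), of d] by auto
  then have "(par ^^ d) a = rt"
    using assms by (auto simp: wf_tree_def)
  then show "a \<in> leaves_under N d rt"
    using a by (simp add: leaves_under_def)
qed (auto simp: leaves_under_def)

text \<open>Labels above \<open>r\<close> are collapsed so that there are only finitely many colours; this
  only affects inner nodes, whose colour is never inspected.\<close>

fun colour :: "'n pointed_tree \<Rightarrow> nat \<times> nat set" where
  "colour ((N, \<tau>), v) = (if lab v \<le> r then lab v else 0, {j. j < K \<and> v \<in> \<tau> j})"

lemma colour_leaf:
  "wf_tree N \<Longrightarrow> a \<in> leaves_under N k v \<Longrightarrow> colour ((N', \<tau>), a) = (lab a, {j. j < K \<and> a \<in> \<tau> j})"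
  by (auto simp: wf_tree_def leaves_under_def)

primrec same_type :: "nat \<Rightarrow> nat \<Rightarrow> 'n pointed_tree \<Rightarrow> 'n pointed_tree \<Rightarrow> bool" where
  "same_type m 0 x y \<longleftrightarrow> colour x = colour y"
| "same_type m (Suc k) x y \<longleftrightarrow>
     (\<forall>z. capped_card m {w \<in> children (fst (fst x)) (snd x). same_type m k (fst x, w) z} =
          capped_card m {w \<in> children (fst (fst y)) (snd y). same_type m k (fst y, w) z})"

lemma same_type_refl [simp]: "same_type m k x x"
  by (cases k) auto

lemma same_type_sym: "same_type m k x y \<Longrightarrow> same_type m k y x"
  by (cases k) auto

lemma same_type_trans: "same_type m k x y \<Longrightarrow> same_type m k y z \<Longrightarrow> same_type m k x z"
  by (cases k) auto

declare same_type.simps(2) [simp del] \<comment> \<open>superseded by \<open>same_type_Suc_iff\<close> and \<open>same_type_Suc_fibres\<close>\<close>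

definition tree_type :: "nat \<Rightarrow> nat \<Rightarrow> 'n pointed_tree \<Rightarrow> 'n pointed_tree set" where
  "tree_type m k x = {y. same_type m k x y}"

lemma tree_type_eq_iff: "tree_type m k x = tree_type m k y \<longleftrightarrow> same_type m k x y"
proof
  assume "tree_type m k x = tree_type m k y"
  then have "y \<in> tree_type m k x"
    by (simp add: tree_type_def)
  then show "same_type m k x y"
    by (simp add: tree_type_def)
next
  assume "same_type m k x y"
  then show "tree_type m k x = tree_type m k y"
    unfolding tree_type_def using same_type_sym same_type_trans by blast
qed

definition child_type_count :: "nat \<Rightarrow> nat \<Rightarrow> 'n pointed_tree \<Rightarrow> 'n pointed_tree set \<Rightarrow> nat" where
  "child_type_count m k x \<omega> =
     capped_card m {w \<in> children (fst (fst x)) (snd x). tree_type m k (fst x, w) = \<omega>}"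

lemma child_type_count_eq_0:
  assumes "\<omega> \<notin> range (tree_type m k)"
  shows "child_type_count m k x \<omega> = 0"
proof -
  have empty: "{w \<in> children (fst (fst x)) (snd x). tree_type m k (fst x, w) = \<omega>} = {}"
    using assms by auto
  show ?thesis
    unfolding child_type_count_def empty by simp
qed

lemma child_type_count_le: "child_type_count m k x \<omega> \<le> m"
  by (simp add: child_type_count_def capped_card_le)

lemma same_type_Suc_iff: "same_type m (Suc k) x y \<longleftrightarrow> child_type_count m k x = child_type_count m k y"
proof
  assume "same_type m (Suc k) x y"
  then show "child_type_count m k x = child_type_count m k y"
  proof (intro ext)
    fix \<omega>
    show "child_type_count m k x \<omega> = child_type_count m k y \<omega>"
    proof (cases "\<omega> \<in> range (tree_type m k)")
      case True
      then obtain z where z: "\<omega> = tree_type m k z"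
        by blast
      from \<open>same_type m (Suc k) x y\<close>
      have "capped_card m {w \<in> children (fst (fst x)) (snd x). same_type m k (fst x, w) z} =
            capped_card m {w \<in> children (fst (fst y)) (snd y). same_type m k (fst y, w) z}"
        unfolding same_type.simps by (rule spec)
      then show ?thesis
        by (simp add: child_type_count_def z tree_type_eq_iff)
    next
      case False
      then show ?thesis
        by (simp add: child_type_count_eq_0)
    qed
  qed
next
  assume "child_type_count m k x = child_type_count m k y"
  then have "child_type_count m k x (tree_type m k z) = child_type_count m k y (tree_type m k z)" for z
    by simp
  then show "same_type m (Suc k) x y"
    unfolding same_type.simps by (simp add: child_type_count_def tree_type_eq_iff)
qed

lemma same_type_Suc_fibres:
  "same_type m (Suc k) ((N1, \<tau>1), v1) ((N2, \<tau>2), v2) \<longleftrightarrow>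
    (\<forall>\<omega>. capped_card m {w \<in> children N1 v1. tree_type m k ((N1, \<tau>1), w) = \<omega>} =
         capped_card m {w \<in> children N2 v2. tree_type m k ((N2, \<tau>2), w) = \<omega>})"
  unfolding same_type_Suc_iff child_type_count_def fun_eq_iff by simp

lemma same_type_SucD:
  assumes "same_type m (Suc k) ((N1, \<tau>1), v1) ((N2, \<tau>2), v2)"
  shows "capped_card m {w \<in> children N1 v1. tree_type m k ((N1, \<tau>1), w) = \<omega>} =
         capped_card m {w \<in> children N2 v2. tree_type m k ((N2, \<tau>2), w) = \<omega>}"
  using assms unfolding same_type_Suc_fibres by blast

lemma colour_range: "colour x \<in> {..r} \<times> Pow {..<K}"
  by (cases x rule: colour.cases) auto

lemma finite_tree_types: "finite (range (tree_type m k))"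
proof (induction k)
  case 0
  have "tree_type m 0 x = {y. colour y = colour x}" for x
    unfolding tree_type_def by (metis same_type.simps(1))
  then have "range (tree_type m 0) \<subseteq> (\<lambda>c. {y. colour y = c}) ` ({..r} \<times> Pow {..<K})"
    using colour_range by blast
  then show ?case
    by (rule finite_subset) simp
next
  case (Suc k)
  let ?W = "range (tree_type m k)"
  have "tree_type m (Suc k) = (\<lambda>x. {y. child_type_count m k x = child_type_count m k y})"
    by (intro ext) (simp add: tree_type_def same_type_Suc_iff)
  then have "range (tree_type m (Suc k)) = (\<lambda>f. {y. f = child_type_count m k y}) ` range (child_type_count m k)"
    by (simp add: image_image)
  moreover have "range (child_type_count m k) \<subseteq>
      {f. \<forall>\<omega>. (\<omega> \<in> ?W \<longrightarrow> f \<omega> \<in> {..m}) \<and> (\<omega> \<notin> ?W \<longrightarrow> f \<omega> = 0)}"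
    by (simp add: image_subset_iff child_type_count_le child_type_count_eq_0)
  then have "finite (range (child_type_count m k))"
    by (rule finite_subset[OF _ finite_set_of_finite_funs[OF Suc.IH finite_atMost]])
  ultimately show ?case
    by simp
qed

definition num_types :: "nat \<Rightarrow> nat \<Rightarrow> nat" where
  "num_types m k = card (range (tree_type m k))"

lemma same_type_Suc_child:
  assumes "same_type m (Suc k) ((N1, \<tau>1), v1) ((N2, \<tau>2), v2)" "1 \<le> m" "w1 \<in> children N1 v1"
  obtains w2 where "w2 \<in> children N2 v2" "same_type m k ((N1, \<tau>1), w1) ((N2, \<tau>2), w2)"
proof -
  let ?t = "tree_type m k ((N1, \<tau>1), w1)"
  have "{w \<in> children N1 v1. tree_type m k ((N1, \<tau>1), w) = ?t} \<noteq> {}"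
    using assms(3) by blast
  then have "{w \<in> children N2 v2. tree_type m k ((N2, \<tau>2), w) = ?t} \<noteq> {}"
    by (rule capped_card_eq_nonempty[OF assms(2) same_type_SucD[OF assms(1)]])
  then obtain w2 where "w2 \<in> children N2 v2" "tree_type m k ((N2, \<tau>2), w2) = ?t"
    by blast
  then show ?thesis
    using that tree_type_eq_iff same_type_sym by metis
qed

lemma same_type_Suc_two_children:
  assumes "same_type m (Suc k) ((N1, \<tau>1), v1) ((N2, \<tau>2), v2)" "2 \<le> m"
    and "w1 \<in> children N1 v1" "w1' \<in> children N1 v1" "w1 \<noteq> w1'"
  obtains w2 w2' where "w2 \<in> children N2 v2" "w2' \<in> children N2 v2" "w2 \<noteq> w2'"
    "same_type m k ((N1, \<tau>1), w1) ((N2, \<tau>2), w2)" "same_type m k ((N1, \<tau>1), w1') ((N2, \<tau>2), w2')"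
proof (cases "same_type m k ((N1, \<tau>1), w1) ((N1, \<tau>1), w1')")
  case True
  let ?t = "tree_type m k ((N1, \<tau>1), w1)"
  have "tree_type m k ((N1, \<tau>1), w1') = ?t"
    using True same_type_sym tree_type_eq_iff by metis
  then have "2 \<le> capped_card m {w \<in> children N1 v1. tree_type m k ((N1, \<tau>1), w) = ?t}"
    using assms(3-5) by (intro two_le_capped_card_iff[OF assms(2), THEN iffD2]) auto
  then have "2 \<le> capped_card m {w \<in> children N2 v2. tree_type m k ((N2, \<tau>2), w) = ?t}"
    using same_type_SucD[OF assms(1), of ?t] by simp
  then obtain w2 w2' where "w2 \<in> children N2 v2" "w2' \<in> children N2 v2" "w2 \<noteq> w2'"
      "tree_type m k ((N2, \<tau>2), w2) = ?t" "tree_type m k ((N2, \<tau>2), w2') = ?t"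
    using two_le_capped_card_iff[OF assms(2), THEN iffD1] by blast
  moreover from this have "same_type m k ((N1, \<tau>1), w1) ((N2, \<tau>2), w2)"
      "same_type m k ((N1, \<tau>1), w1') ((N2, \<tau>2), w2')"
    using True same_type_sym same_type_trans tree_type_eq_iff by metis+
  ultimately show ?thesis
    using that by blast
next
  case False
  obtain w2 where w2: "w2 \<in> children N2 v2" "same_type m k ((N1, \<tau>1), w1) ((N2, \<tau>2), w2)"
    using same_type_Suc_child[OF assms(1) _ assms(3)] assms(2) by auto
  obtain w2' where w2': "w2' \<in> children N2 v2" "same_type m k ((N1, \<tau>1), w1') ((N2, \<tau>2), w2')"
    using same_type_Suc_child[OF assms(1) _ assms(4)] assms(2) by auto
  have "w2 \<noteq> w2'"
    using False w2(2) w2'(2) same_type_sym same_type_trans by metis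
  then show ?thesis
    using that w2 w2' by blast
qed

lemma same_type_leaf_colour:
  assumes "wf_tree N1" "wf_tree N2" "1 \<le> m"
  shows "at_height N1 k v1 \<Longrightarrow> at_height N2 k v2 \<Longrightarrow> same_type m k ((N1, \<tau>1), v1) ((N2, \<tau>2), v2) \<Longrightarrow>
    a \<in> leaves_under N1 k v1 \<Longrightarrow> \<exists>b\<in>leaves_under N2 k v2. colour ((N2, \<tau>2), b) = colour ((N1, \<tau>1), a)"
proof (induction k arbitrary: v1 v2)
  case 0
  then show ?case
    using leaves_under_0 by auto
next
  case (Suc k)
  obtain w1 where w1: "w1 \<in> children N1 v1" "a \<in> leaves_under N1 k w1"
    using leaves_under_Suc[OF assms(1) Suc.prems(1)] Suc.prems(4) by blast
  obtain w2 where w2: "w2 \<in> children N2 v2" "same_type m k ((N1, \<tau>1), w1) ((N2, \<tau>2), w2)"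
    using same_type_Suc_child[OF Suc.prems(3) assms(3) w1(1)] .
  obtain b where "b \<in> leaves_under N2 k w2" "colour ((N2, \<tau>2), b) = colour ((N1, \<tau>1), a)"
    using Suc.IH[OF at_height_child[OF assms(1) Suc.prems(1) w1(1)]
        at_height_child[OF assms(2) Suc.prems(2) w2(1)] w2(2) w1(2)] by blast
  then show ?case
    using leaves_under_child_subset[OF assms(2) Suc.prems(2) w2(1)] by blast
qed

lemma same_type_local:
  assumes "wf_tree N"
  shows "at_height N k v \<Longrightarrow> (\<And>j. \<tau> j \<inter> leaves_under N k v = \<tau>' j \<inter> leaves_under N k v) \<Longrightarrow>
    same_type m k ((N, \<tau>), v) ((N, \<tau>'), v)"
proof (induction k arbitrary: v)
  case 0
  then have "v \<in> \<tau> j \<longleftrightarrow> v \<in> \<tau>' j" for j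
    using leaves_under_0 by blast
  then show ?case
    by simp
next
  case (Suc k)
  have "same_type m k ((N, \<tau>), w) ((N, \<tau>'), w)" if w: "w \<in> children N v" for w
  proof (rule Suc.IH)
    show "at_height N k w"
      using at_height_child[OF assms Suc.prems(1) w] .
    show "\<tau> j \<inter> leaves_under N k w = \<tau>' j \<inter> leaves_under N k w" for j
      using Suc.prems(2)[of j] leaves_under_child_subset[OF assms Suc.prems(1) w] by blast
  qed
  then have "tree_type m k ((N, \<tau>), w) = tree_type m k ((N, \<tau>'), w)" if "w \<in> children N v" for w
    using that tree_type_eq_iff by blast
  then show ?case
    unfolding same_type_Suc_fibres by (metis (no_types, lifting) Collect_cong)
qed

lemma tm_adj_distinct_children:
  assumes "wf_tree N" "wa \<in> children N v" "wb \<in> children N v" "wa \<noteq> wb"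
    and "a \<in> leaves_under N k wa" "b \<in> leaves_under N k wb"
  shows "tm_adj par lab S a b \<longleftrightarrow> (lab a, lab b, Suc k) \<in> S"
proof (rule tm_adj_meet)
  have "(par ^^ k) a = wa" "(par ^^ k) b = wb"
    using assms(5,6) by (simp_all add: leaves_under_def)
  then show "(par ^^ k) a \<noteq> (par ^^ k) b" "(par ^^ Suc k) a = (par ^^ Suc k) b"
    using assms(4) in_childrenD(2)[OF assms(1,2)] in_childrenD(2)[OF assms(1,3)] by simp_all
qed

lemma same_type_ex_leaf:
  assumes "wf_tree N1" "wf_tree N2" "1 \<le> m"
    and "at_height N1 k v1" "at_height N2 k v2" "same_type m k ((N1, \<tau>1), v1) ((N2, \<tau>2), v2)"
    and "a \<in> leaves_under N1 k v1"
  obtains b where "b \<in> leaves_under N2 k v2" "lab b = lab a" "\<And>j. j < K \<Longrightarrow> b \<in> \<tau>2 j \<longleftrightarrow> a \<in> \<tau>1 j"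
proof -
  obtain b where b: "b \<in> leaves_under N2 k v2" "colour ((N2, \<tau>2), b) = colour ((N1, \<tau>1), a)"
    using same_type_leaf_colour[OF assms] by blast
  then have "lab b = lab a" "{j. j < K \<and> b \<in> \<tau>2 j} = {j. j < K \<and> a \<in> \<tau>1 j}"
    using colour_leaf[OF assms(1,7)] colour_leaf[OF assms(2) b(1)] by simp_all
  then show ?thesis
    using that b(1) by blast
qed

definition edge_below :: "(nat \<times> nat \<times> nat) set \<Rightarrow> 'n set \<Rightarrow> (nat \<Rightarrow> 'n set) \<Rightarrow> nat \<Rightarrow> 'n \<Rightarrow> nat \<Rightarrow> nat \<Rightarrow> bool" where
  "edge_below S N \<tau> k v i j \<longleftrightarrow>
     (\<exists>a \<in> leaves_under N k v \<inter> \<tau> i. \<exists>b \<in> leaves_under N k v \<inter> \<tau> j. tm_adj par lab S a b)"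

lemma edge_below_child:
  "wf_tree N \<Longrightarrow> at_height N (Suc k) v \<Longrightarrow> w \<in> children N v \<Longrightarrow> edge_below S N \<tau> k w i j \<Longrightarrow>
    edge_below S N \<tau> (Suc k) v i j"
  using leaves_under_child_subset unfolding edge_below_def by blast

lemma same_type_edge_across:
  assumes wf: "wf_tree N1" "wf_tree N2" and m: "2 \<le> m" and ij: "i < K" "j < K"
    and v: "at_height N1 (Suc k) v1" "at_height N2 (Suc k) v2"
    and st: "same_type m (Suc k) ((N1, \<tau>1), v1) ((N2, \<tau>2), v2)"
    and w: "wa \<in> children N1 v1" "wb \<in> children N1 v1" "wa \<noteq> wb"
    and ab: "a \<in> leaves_under N1 k wa" "b \<in> leaves_under N1 k wb" "a \<in> \<tau>1 i" "b \<in> \<tau>1 j"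
      "tm_adj par lab S a b"
  shows "edge_below S N2 \<tau>2 (Suc k) v2 i j"
proof -
  obtain w2a w2b where w2: "w2a \<in> children N2 v2" "w2b \<in> children N2 v2" "w2a \<noteq> w2b"
      "same_type m k ((N1, \<tau>1), wa) ((N2, \<tau>2), w2a)" "same_type m k ((N1, \<tau>1), wb) ((N2, \<tau>2), w2b)"
    using same_type_Suc_two_children[OF st m w] by blast
  have m1: "1 \<le> m"
    using m by simp
  obtain a' where a': "a' \<in> leaves_under N2 k w2a" "lab a' = lab a" "a' \<in> \<tau>2 i"
    using same_type_ex_leaf[OF wf m1 at_height_child[OF wf(1) v(1) w(1)]
        at_height_child[OF wf(2) v(2) w2(1)] w2(4) ab(1)] ab(3) ij(1) by metis
  obtain b' where b': "b' \<in> leaves_under N2 k w2b" "lab b' = lab b" "b' \<in> \<tau>2 j"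
    using same_type_ex_leaf[OF wf m1 at_height_child[OF wf(1) v(1) w(2)]
        at_height_child[OF wf(2) v(2) w2(2)] w2(5) ab(2)] ab(4) ij(2) by metis
  have "tm_adj par lab S a' b'"
    using tm_adj_distinct_children[OF wf(2) w2(1-3) a'(1) b'(1)] a'(2) b'(2)
      tm_adj_distinct_children[OF wf(1) w ab(1,2)] ab(5) by simp
  then show ?thesis
    using a' b' leaves_under_child_subset[OF wf(2) v(2)] w2(1,2)
    unfolding edge_below_def by blast
qed

lemma same_type_edge_below:
  assumes wf: "wf_tree N1" "wf_tree N2" and m: "2 \<le> m" and ij: "i < K" "j < K"
  shows "at_height N1 k v1 \<Longrightarrow> at_height N2 k v2 \<Longrightarrow> same_type m k ((N1, \<tau>1), v1) ((N2, \<tau>2), v2) \<Longrightarrow>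
    edge_below S N1 \<tau>1 k v1 i j \<Longrightarrow> edge_below S N2 \<tau>2 k v2 i j"
proof (induction k arbitrary: v1 v2)
  case 0
  then have "colour ((N1, \<tau>1), v1) = colour ((N2, \<tau>2), v2)" "lab v1 \<le> r" "lab v2 \<le> r"
    using wf by (auto simp: wf_tree_def at_height_def)
  then have "lab v1 = lab v2" "v1 \<in> \<tau>1 i \<longleftrightarrow> v2 \<in> \<tau>2 i" "v1 \<in> \<tau>1 j \<longleftrightarrow> v2 \<in> \<tau>2 j"
    using ij by (auto simp: set_eq_iff)
  then show ?case
    using 0 leaves_under_0 by (simp add: edge_below_def tm_adj_self)
next
  case (Suc k)
  obtain a b where ab: "a \<in> leaves_under N1 (Suc k) v1" "b \<in> leaves_under N1 (Suc k) v1"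
      "a \<in> \<tau>1 i" "b \<in> \<tau>1 j" "tm_adj par lab S a b"
    using Suc.prems(4) unfolding edge_below_def by blast
  obtain wa wb where w: "wa \<in> children N1 v1" "wb \<in> children N1 v1"
      "a \<in> leaves_under N1 k wa" "b \<in> leaves_under N1 k wb"
    using ab(1,2) leaves_under_Suc[OF wf(1) Suc.prems(1)] by blast
  show ?case
  proof (cases "wa = wb")
    case True
    obtain w2 where w2: "w2 \<in> children N2 v2" "same_type m k ((N1, \<tau>1), wa) ((N2, \<tau>2), w2)"
      using same_type_Suc_child[OF Suc.prems(3) _ w(1)] m by auto
    have "edge_below S N1 \<tau>1 k wa i j"
      using ab w True unfolding edge_below_def by blast
    then have "edge_below S N2 \<tau>2 k w2 i j"
      using Suc.IH[OF at_height_child[OF wf(1) Suc.prems(1) w(1)]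
          at_height_child[OF wf(2) Suc.prems(2) w2(1)] w2(2)] by blast
    then show ?thesis
      using edge_below_child[OF wf(2) Suc.prems(2) w2(1)] by blast
  next
    case False
    show ?thesis
      using same_type_edge_across[OF wf m ij Suc.prems(1-3) w(1,2) False w(3,4) ab(3-5)] .
  qed
qed

lemma same_type_not_subset:
  assumes "wf_tree N1" "wf_tree N2" "1 \<le> m" "i < K" "j < K"
    and "same_type m d ((N1, \<tau>1), rt) ((N2, \<tau>2), rt)"
    and "\<tau>1 i \<subseteq> leaves_under N1 d rt" "\<not> \<tau>1 i \<subseteq> \<tau>1 j"
  shows "\<not> \<tau>2 i \<subseteq> \<tau>2 j"
proof -
  obtain a where a: "a \<in> \<tau>1 i" "a \<notin> \<tau>1 j"
    using assms(8) by blast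
  then have "a \<in> leaves_under N1 d rt"
    using assms(7) by blast
  then obtain b where "b \<in> leaves_under N2 d rt" "lab b = lab a" "\<And>j'. j' < K \<Longrightarrow> b \<in> \<tau>2 j' \<longleftrightarrow> a \<in> \<tau>1 j'"
    by (rule same_type_ex_leaf[OF assms(1-3) at_height_root[OF assms(1)] at_height_root[OF assms(2)] assms(6)]) blast
  then show ?thesis
    using a assms(4,5) by blast
qed

lemma same_type_update_local:
  assumes "wf_tree N" "at_height N k v" "X \<inter> leaves_under N k v = X' \<inter> leaves_under N k v"
  shows "same_type m k ((N, \<tau>(i := X)), v) ((N, \<tau>(i := X')), v)"
  by (rule same_type_local[OF assms(1,2)]) (use assms(3) in simp)

lemma same_type_update_UN:
  assumes "wf_tree N" "at_height N (Suc k) v" "b \<in> children N v"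
    and "\<And>b. b \<in> children N v \<Longrightarrow> XX b \<subseteq> leaves_under N k b"
  shows "same_type m k ((N, \<tau>(i := \<Union>(XX ` children N v))), b) ((N, \<tau>(i := XX b)), b)"
proof (rule same_type_update_local[OF assms(1) at_height_child[OF assms(1-3)]])
  have "XX b' \<inter> leaves_under N k b = {}" if "b' \<in> children N v" "b' \<noteq> b" for b'
    using assms(4)[OF that(1)] leaves_under_disjoint[OF that(2)] by blast
  then show "\<Union>(XX ` children N v) \<inter> leaves_under N k b = XX b \<inter> leaves_under N k b"
    using assms(3) by blast
qed

lemma same_type_SucI_pullback:
  assumes "\<And>b. b \<in> children N2 v2 \<Longrightarrow> same_type m k ((N2, \<tau>2), b) ((N1, \<tau>1), \<pi> b)"
    and "\<And>\<omega>. capped_card m {b \<in> children N2 v2. tree_type m k ((N1, \<tau>1), \<pi> b) = \<omega>} =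
              capped_card m {a \<in> children N1 v1. tree_type m k ((N1, \<tau>1), a) = \<omega>}"
  shows "same_type m (Suc k) ((N1, \<tau>1), v1) ((N2, \<tau>2), v2)"
proof -
  have "{b \<in> children N2 v2. tree_type m k ((N2, \<tau>2), b) = \<omega>} =
      {b \<in> children N2 v2. tree_type m k ((N1, \<tau>1), \<pi> b) = \<omega>}" for \<omega>
    using assms(1) tree_type_eq_iff by blast
  then show ?thesis
    unfolding same_type_Suc_fibres using assms(2) by simp
qed

lemma same_type_set_move_Suc:
  assumes wf: "wf_tree N2" and m0: "1 \<le> m0" and T: "num_types m0 k \<le> T" and Tm: "T * m0 < m1"
    and v2: "at_height N2 (Suc k) v2" and st: "same_type m1 (Suc k) ((N1, \<tau>1), v1) ((N2, \<tau>2), v2)"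
    and move: "\<And>a b. a \<in> children N1 v1 \<Longrightarrow> b \<in> children N2 v2 \<Longrightarrow>
      same_type m1 k ((N1, \<tau>1), a) ((N2, \<tau>2), b) \<Longrightarrow>
      \<exists>Xb \<subseteq> leaves_under N2 k b. same_type m0 k ((N1, \<tau>1(i := X)), a) ((N2, \<tau>2(i := Xb)), b)"
  shows "\<exists>X2 \<subseteq> leaves_under N2 (Suc k) v2.
    same_type m0 (Suc k) ((N1, \<tau>1(i := X)), v1) ((N2, \<tau>2(i := X2)), v2)"
proof -
  let ?A = "children N1 v1" and ?B = "children N2 v2"
  let ?g = "\<lambda>a. tree_type m0 k ((N1, \<tau>1(i := X)), a)"
  have g: "?g ` ?A \<subseteq> range (tree_type m0 k)"
    by blast
  then have card_g: "card (?g ` ?A) \<le> T"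
    using card_mono[OF finite_tree_types g] T by (simp add: num_types_def)
  have "\<exists>\<pi>. (\<forall>b\<in>?B. \<pi> b \<in> ?A \<and> tree_type m1 k ((N1, \<tau>1), \<pi> b) = tree_type m1 k ((N2, \<tau>2), b)) \<and>
      (\<forall>\<omega>. capped_card m0 {b\<in>?B. ?g (\<pi> b) = \<omega>} = capped_card m0 {a\<in>?A. ?g a = \<omega>})"
    by (rule capped_fibres_pullback_refined[OF finite_tree_types _ _ same_type_SucD[OF st]
        finite_subset[OF g finite_tree_types] card_g Tm m0]) blast+
  then obtain \<pi> where \<pi>: "\<And>b. b \<in> ?B \<Longrightarrow> \<pi> b \<in> ?A \<and> tree_type m1 k ((N1, \<tau>1), \<pi> b) = tree_type m1 k ((N2, \<tau>2), b)"
      "\<And>\<omega>. capped_card m0 {b\<in>?B. ?g (\<pi> b) = \<omega>} = capped_card m0 {a\<in>?A. ?g a = \<omega>}"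
    by blast
  have "\<forall>b\<in>?B. \<exists>Xb \<subseteq> leaves_under N2 k b. same_type m0 k ((N1, \<tau>1(i := X)), \<pi> b) ((N2, \<tau>2(i := Xb)), b)"
  proof
    fix b assume b: "b \<in> ?B"
    have "same_type m1 k ((N1, \<tau>1), \<pi> b) ((N2, \<tau>2), b)"
      using \<pi>(1)[OF b] tree_type_eq_iff by blast
    then show "\<exists>Xb \<subseteq> leaves_under N2 k b. same_type m0 k ((N1, \<tau>1(i := X)), \<pi> b) ((N2, \<tau>2(i := Xb)), b)"
      using move \<pi>(1)[OF b] b by blast
  qed
  then obtain XX where XX: "\<And>b. b \<in> ?B \<Longrightarrow> XX b \<subseteq> leaves_under N2 k b \<and>
      same_type m0 k ((N1, \<tau>1(i := X)), \<pi> b) ((N2, \<tau>2(i := XX b)), b)"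
    by metis
  have "same_type m0 (Suc k) ((N1, \<tau>1(i := X)), v1) ((N2, \<tau>2(i := \<Union>(XX ` ?B))), v2)"
  proof (rule same_type_SucI_pullback)
    fix b assume b: "b \<in> ?B"
    show "same_type m0 k ((N2, \<tau>2(i := \<Union>(XX ` ?B))), b) ((N1, \<tau>1(i := X)), \<pi> b)"
      using same_type_update_UN[OF wf v2 b, of XX] XX[OF b] XX same_type_sym same_type_trans by meson
  qed (rule \<pi>(2))
  moreover have "\<Union>(XX ` ?B) \<subseteq> leaves_under N2 (Suc k) v2"
    using XX leaves_under_Suc[OF wf v2] by blast
  ultimately show ?thesis
    by blast
qed

text \<open>Duplicator's answer to a set move in the Ehrenfeucht-Fraisse game.\<close>

lemma same_type_set_move:
  assumes wf: "wf_tree N1" "wf_tree N2" and m0: "1 \<le> m0"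
    and T: "\<And>k'. k' < d \<Longrightarrow> num_types m0 k' \<le> T" and Tm: "T * m0 < m1"
  shows "at_height N1 k v1 \<Longrightarrow> at_height N2 k v2 \<Longrightarrow> same_type m1 k ((N1, \<tau>1), v1) ((N2, \<tau>2), v2) \<Longrightarrow>
    \<exists>X2 \<subseteq> leaves_under N2 k v2. same_type m0 k ((N1, \<tau>1(i := X)), v1) ((N2, \<tau>2(i := X2)), v2)"
proof (induction k arbitrary: v1 v2)
  case 0
  define X2 where "X2 = (if v1 \<in> X then {v2} else {})"
  have "colour ((N1, \<tau>1), v1) = colour ((N2, \<tau>2), v2)"
    using "0.prems"(3) by simp
  then have "colour ((N1, \<tau>1(i := X)), v1) = colour ((N2, \<tau>2(i := X2)), v2)"
    by (auto simp: X2_def)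
  moreover have "X2 \<subseteq> leaves_under N2 0 v2"
    using leaves_under_0[OF "0.prems"(2)] by (simp add: X2_def)
  ultimately show ?case
    by auto
next
  case (Suc k)
  have "k < d"
    using Suc.prems(1) by (simp add: at_height_def)
  show ?case
  proof (rule same_type_set_move_Suc[OF wf(2) m0 T[OF \<open>k < d\<close>] Tm Suc.prems(2,3)])
    fix a b assume "a \<in> children N1 v1" "b \<in> children N2 v2" "same_type m1 k ((N1, \<tau>1), a) ((N2, \<tau>2), b)"
    then show "\<exists>Xb \<subseteq> leaves_under N2 k b. same_type m0 k ((N1, \<tau>1(i := X)), a) ((N2, \<tau>2(i := Xb)), b)"
      using Suc.IH at_height_child[OF wf(1) Suc.prems(1)] at_height_child[OF wf(2) Suc.prems(2)] by blast
  qed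
qed

section \<open>Pruning to a finite subtree\<close>

definition prune :: "'n set \<Rightarrow> ('n \<Rightarrow> bool) \<Rightarrow> 'n set" where
  "prune N keep = {w \<in> N. \<forall>j < dep w. keep ((par ^^ j) w)}"

lemma prune_subset: "prune N keep \<subseteq> N"
  by (auto simp: prune_def)

lemma root_in_prune: "wf_tree N \<Longrightarrow> rt \<in> prune N keep"
  by (simp add: prune_def wf_tree_def)

lemma parent_in_prune:
  assumes "wf_tree N" "w \<in> prune N keep" "w \<noteq> rt"
  shows "par w \<in> prune N keep"
proof -
  have w: "w \<in> N" "\<forall>j < dep w. keep ((par ^^ j) w)"
    using assms(2) by (auto simp: prune_def)
  then have p: "par w \<in> N" "dep w = Suc (dep (par w))"
    using assms(1,3) by (auto simp: wf_tree_def)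
  have "keep ((par ^^ j) (par w))" if "j < dep (par w)" for j
    using w(2)[rule_format, of "Suc j"] that p(2) by (simp add: funpow_swap1)
  then show ?thesis
    using p(1) by (simp add: prune_def)
qed

lemma children_prune:
  assumes "wf_tree N" "v \<in> prune N keep"
  shows "children (prune N keep) v = {w \<in> children N v. keep w}"
proof (intro equalityI subsetI)
  fix w assume "w \<in> children (prune N keep) v"
  then have w: "w \<in> prune N keep" "w \<in> children N v"
    using prune_subset by (auto simp: children_def)
  then have "0 < dep w"
    using in_childrenD(4)[OF assms(1)] by simp
  then show "w \<in> {w \<in> children N v. keep w}"
    using w by (auto simp: prune_def)
next
  fix w assume w: "w \<in> {w \<in> children N v. keep w}"
  then have c: "w \<in> N" "par w = v" "dep w = Suc (dep v)"
    using in_childrenD[OF assms(1)] by auto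
  have "keep ((par ^^ j) w)" if "j < dep w" for j
  proof (cases j)
    case (Suc j')
    then show ?thesis
      using assms(2) that c by (auto simp: prune_def funpow_swap1)
  qed (use w in simp)
  then show "w \<in> children (prune N keep) v"
    using w c(1) by (auto simp: prune_def children_def)
qed

lemma wf_tree_prune:
  assumes wf: "wf_tree N" and keep: "\<And>v. v \<in> N \<Longrightarrow> dep v < d \<Longrightarrow> \<exists>w \<in> children N v. keep w"
  shows "wf_tree (prune N keep)"
  unfolding wf_tree_def
proof (intro conjI ballI impI)
  show "rt \<in> prune N keep" "dep rt = 0"
    using root_in_prune[OF wf] wf_treeD(2)[OF wf] .
next
  fix v assume v: "v \<in> prune N keep"
  then have "v \<in> N"
    using prune_subset by blast
  then show "dep v \<le> d"
    using wf_treeD(5)[OF wf] by blast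
  show "dep v = d \<Longrightarrow> lab v \<le> r"
    using wf_treeD(7)[OF wf \<open>v \<in> N\<close>] .
  show "dep v < d \<Longrightarrow> children (prune N keep) v \<noteq> {}"
    using keep[OF \<open>v \<in> N\<close>] children_prune[OF wf v] by blast
  assume "v \<noteq> rt"
  then show "par v \<in> prune N keep" "dep v = Suc (dep (par v))"
    using parent_in_prune[OF wf v] wf_treeD(4)[OF wf \<open>v \<in> N\<close>] by simp_all
qed

lemma finite_prune:
  assumes "wf_tree N" and fin: "\<And>v. finite {w \<in> children N v. keep w}"
  shows "finite (prune N keep)"
proof -
  define level where "level t = {w \<in> prune N keep. dep w = t}" for t
  have "finite (level t)" for t
  proof (induction t)
    case 0
    have "level 0 \<subseteq> {rt}"
      using wf_treeD(4)[OF assms(1)] prune_subset by (fastforce simp: level_def)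
    then show ?case
      using finite_subset by blast
  next
    case (Suc t)
    have "level (Suc t) \<subseteq> (\<Union>v\<in>level t. {w \<in> children N v. keep w})"
    proof
      fix w assume w: "w \<in> level (Suc t)"
      then have "w \<noteq> rt" "w \<in> N"
        using assms(1) prune_subset by (auto simp: level_def wf_tree_def)
      then have "par w \<in> level t" "w \<in> children (prune N keep) (par w)"
        using w parent_in_prune[OF assms(1)] assms(1)
        by (auto simp: level_def wf_tree_def children_def)
      then show "w \<in> (\<Union>v\<in>level t. {w \<in> children N v. keep w})"
        using children_prune[OF assms(1)] by (auto simp: level_def)
    qed
    then show ?case
      using Suc.IH fin by (meson finite_UN_I finite_subset)
  qed
  moreover have "prune N keep \<subseteq> (\<Union>t\<le>d. level t)"
    using wf_treeD(5)[OF assms(1)] prune_subset by (fastforce simp: level_def)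
  ultimately show ?thesis
    by (meson finite_UN_I finite_atMost finite_subset)
qed

lemma same_type_prune:
  assumes wf: "wf_tree N"
    and counts: "\<And>v k \<omega>. at_height N (Suc k) v \<Longrightarrow>
      capped_card m {w \<in> children N v. keep w \<and> tree_type m k ((N, \<tau>), w) = \<omega>} =
      capped_card m {w \<in> children N v. tree_type m k ((N, \<tau>), w) = \<omega>}"
  shows "at_height (prune N keep) k v \<Longrightarrow> same_type m k ((N, \<tau>), v) ((prune N keep, \<tau>), v)"
proof (induction k arbitrary: v)
  case (Suc k)
  let ?N' = "prune N keep"
  have v: "v \<in> ?N'" "at_height N (Suc k) v"
    using Suc.prems prune_subset by (auto simp: at_height_def)
  have "tree_type m k ((?N', \<tau>), w) = tree_type m k ((N, \<tau>), w)" if "w \<in> children ?N' v" for w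
  proof -
    have "w \<in> ?N'" "w \<in> children N v"
      using that children_prune[OF wf v(1)] by (auto simp: children_def)
    then have "at_height ?N' k w"
      using at_height_child[OF wf v(2)] by (simp add: at_height_def)
    then show ?thesis
      using Suc.IH tree_type_eq_iff same_type_sym by metis
  qed
  then have "{w \<in> children ?N' v. tree_type m k ((?N', \<tau>), w) = \<omega>} =
      {w \<in> children N v. keep w \<and> tree_type m k ((N, \<tau>), w) = \<omega>}" for \<omega>
    using children_prune[OF wf v(1)] by auto
  then show ?case
    unfolding same_type_Suc_fibres using counts[OF v(2)] by simp
qed simp

lemma exists_capped_keep:
  assumes "finite (range cl)"
  shows "\<exists>keep. (\<forall>v \<omega>. capped_card m {w \<in> children N v. keep w \<and> cl w = \<omega>} =
      capped_card m {w \<in> children N v. cl w = \<omega>}) \<and> (\<forall>v. finite {w \<in> children N v. keep w})"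
proof -
  let ?F = "\<lambda>(v, \<omega>). {w \<in> children N v. cl w = \<omega>}"
  obtain R where "\<forall>x. R x \<subseteq> ?F x \<and> finite (R x) \<and> card (R x) \<le> m \<and> capped_card m (R x) = capped_card m (?F x)"
    using finite_subsets_same_capped_card ..
  then have R: "\<And>x. R x \<subseteq> ?F x" "\<And>x. finite (R x)" "\<And>x. capped_card m (R x) = capped_card m (?F x)"
    by blast+
  define keep where "keep w \<longleftrightarrow> w \<in> R (par w, cl w)" for w
  have kept: "{w \<in> children N v. keep w \<and> cl w = \<omega>} = R (v, \<omega>)" for v \<omega>
    using R(1)[of "(v, \<omega>)"] by (auto simp: keep_def children_def)
  have children_kept: "{w \<in> children N v. keep w} = (\<Union>\<omega> \<in> range cl. R (v, \<omega>))" for v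
    using kept by blast
  have "finite {w \<in> children N v. keep w}" for v
    unfolding children_kept by (rule finite_UN_I[OF assms R(2)])
  moreover have "capped_card m {w \<in> children N v. keep w \<and> cl w = \<omega>} =
      capped_card m {w \<in> children N v. cl w = \<omega>}" for v \<omega>
    using kept R(3)[of "(v, \<omega>)"] by simp
  ultimately show ?thesis
    by blast
qed

lemma exists_finite_subtree_same_type:
  assumes wf: "wf_tree N" and m: "1 \<le> m"
  shows "\<exists>N' \<subseteq> N. finite N' \<and> wf_tree N' \<and> same_type m d ((N, \<tau>), rt) ((N', \<tau>), rt)"
proof -
  define cl where "cl w = tree_type m (d - dep w) ((N, \<tau>), w)" for w
  have "cl w \<in> (\<Union>k\<le>d. range (tree_type m k))" for w
    by (rule UN_I[of "d - dep w"]) (simp_all add: cl_def)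
  then have "range cl \<subseteq> (\<Union>k\<le>d. range (tree_type m k))"
    by blast
  then have "finite (range cl)"
    using finite_tree_types by (meson finite_UN_I finite_atMost finite_subset)
  then obtain keep where keep: "\<And>v \<omega>. capped_card m {w \<in> children N v. keep w \<and> cl w = \<omega>} =
      capped_card m {w \<in> children N v. cl w = \<omega>}" "\<And>v. finite {w \<in> children N v. keep w}"
    using exists_capped_keep by blast
  have cl: "cl w = tree_type m k ((N, \<tau>), w)" if "at_height N (Suc k) v" "w \<in> children N v" for v k w
  proof -
    have "d - dep w = k"
      using at_height_child[OF wf that] by (auto simp: at_height_def)
    then show ?thesis
      by (simp add: cl_def)
  qed
  have "same_type m d ((N, \<tau>), rt) ((prune N keep, \<tau>), rt)"
  proof (rule same_type_prune[OF wf])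
    fix v k \<omega> assume h: "at_height N (Suc k) v"
    then have "{w \<in> children N v. keep w \<and> tree_type m k ((N, \<tau>), w) = \<omega>} =
        {w \<in> children N v. keep w \<and> cl w = \<omega>}"
      "{w \<in> children N v. tree_type m k ((N, \<tau>), w) = \<omega>} = {w \<in> children N v. cl w = \<omega>}"
      using cl[OF h] by auto
    then show "capped_card m {w \<in> children N v. keep w \<and> tree_type m k ((N, \<tau>), w) = \<omega>} =
      capped_card m {w \<in> children N v. tree_type m k ((N, \<tau>), w) = \<omega>}"
      using keep(1)[of v \<omega>] by simp
  next
    show "at_height (prune N keep) d rt"
      using root_in_prune[OF wf] wf_treeD(2)[OF wf] by (simp add: at_height_def)
  qed
  moreover have "wf_tree (prune N keep)"
  proof (rule wf_tree_prune[OF wf])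
    fix v assume "v \<in> N" "dep v < d"
    then obtain w where "w \<in> children N v"
      using wf_treeD(6)[OF wf] by blast
    then have "{w' \<in> children N v. cl w' = cl w} \<noteq> {}"
      by blast
    then have "{w' \<in> children N v. keep w' \<and> cl w' = cl w} \<noteq> {}"
      by (rule capped_card_eq_nonempty[OF m keep(1)[symmetric]])
    then show "\<exists>w \<in> children N v. keep w"
      by blast
  qed
  moreover have "finite (prune N keep)"
    using finite_prune[OF wf keep(2)] .
  ultimately show ?thesis
    using prune_subset by blast
qed

section \<open>Invariance of MSO sentences\<close>

text \<open>Counting children up to \<open>threshold q\<close> suffices for \<open>q\<close> nested set quantifiers: the set
  move from threshold \<open>m1\<close> to \<open>m0\<close> needs \<open>T * m0 < m1\<close>, where \<open>T\<close> bounds the number of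
  types of children.\<close>

primrec threshold :: "nat \<Rightarrow> nat" where
  "threshold 0 = 2"
| "threshold (Suc q) = Suc (Suc ((\<Sum>k<d. num_types (threshold q) k) * threshold q))"

lemma two_le_threshold: "2 \<le> threshold q"
  by (cases q) simp_all

abbreviation leaf_ssat :: "(nat \<times> nat \<times> nat) set \<Rightarrow> 'n set \<Rightarrow> (nat \<Rightarrow> 'n set) \<Rightarrow> sform \<Rightarrow> bool" where
  "leaf_ssat S N \<tau> p \<equiv> ssat (leaves_under N d rt) (tm_adj par lab S) \<tau> p"

lemma leaf_ssat_SEdge_iff:
  "(\<And>j. \<tau> j \<subseteq> leaves_under N d rt) \<Longrightarrow> leaf_ssat S N \<tau> (SEdge i j) \<longleftrightarrow> edge_below S N \<tau> d rt i j"
  unfolding edge_below_def by auto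

lemma same_type_leaf_ssat_SEx:
  assumes IH: "\<And>N1 N2 \<tau>1 \<tau>2. wf_tree N1 \<Longrightarrow> wf_tree N2 \<Longrightarrow>
      (\<And>j. \<tau>1 j \<subseteq> leaves_under N1 d rt) \<Longrightarrow> (\<And>j. \<tau>2 j \<subseteq> leaves_under N2 d rt) \<Longrightarrow>
      same_type (threshold q) d ((N1, \<tau>1), rt) ((N2, \<tau>2), rt) \<Longrightarrow> leaf_ssat S N1 \<tau>1 p \<longleftrightarrow> leaf_ssat S N2 \<tau>2 p"
    and wf: "wf_tree N1" "wf_tree N2"
    and \<tau>: "\<And>j. \<tau>1 j \<subseteq> leaves_under N1 d rt" "\<And>j. \<tau>2 j \<subseteq> leaves_under N2 d rt"
    and st: "same_type (threshold (Suc q)) d ((N1, \<tau>1), rt) ((N2, \<tau>2), rt)"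
    and sat1: "leaf_ssat S N1 \<tau>1 (SEx i p)"
  shows "leaf_ssat S N2 \<tau>2 (SEx i p)"
proof -
  obtain X where X: "X \<subseteq> leaves_under N1 d rt" "leaf_ssat S N1 (\<tau>1(i := X)) p"
    using sat1 by auto
  have T: "num_types (threshold q) k \<le> (\<Sum>k<d. num_types (threshold q) k)" if "k < d" for k
    using that by (intro member_le_sum) auto
  obtain X2 where X2: "X2 \<subseteq> leaves_under N2 d rt"
      "same_type (threshold q) d ((N1, \<tau>1(i := X)), rt) ((N2, \<tau>2(i := X2)), rt)"
    using same_type_set_move[where i = i and X = X, OF wf _ T _ at_height_root[OF wf(1)]
        at_height_root[OF wf(2)] st] two_le_threshold[of q] by auto
  have "leaf_ssat S N1 (\<tau>1(i := X)) p \<longleftrightarrow> leaf_ssat S N2 (\<tau>2(i := X2)) p"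
    by (rule IH[OF wf _ _ X2(2)]) (use X(1) X2(1) \<tau> in auto)
  then show ?thesis
    using X X2(1) by auto
qed

lemma same_type_leaf_ssat_iff:
  "srank p \<le> q \<Longrightarrow> svars p \<subseteq> {..<K} \<Longrightarrow> wf_tree N1 \<Longrightarrow> wf_tree N2 \<Longrightarrow>
    (\<And>j. \<tau>1 j \<subseteq> leaves_under N1 d rt) \<Longrightarrow> (\<And>j. \<tau>2 j \<subseteq> leaves_under N2 d rt) \<Longrightarrow>
    same_type (threshold q) d ((N1, \<tau>1), rt) ((N2, \<tau>2), rt) \<Longrightarrow>
    leaf_ssat S N1 \<tau>1 p \<longleftrightarrow> leaf_ssat S N2 \<tau>2 p"
proof (induction p arbitrary: q N1 N2 \<tau>1 \<tau>2)
  case (SSub i j)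
  have ij: "i < K" "j < K"
    using SSub.prems(2) by auto
  have m: "1 \<le> threshold q"
    using two_le_threshold[of q] by simp
  show ?case
    using same_type_not_subset[OF SSub.prems(3,4) m ij SSub.prems(7,5)]
      same_type_not_subset[OF SSub.prems(4,3) m ij same_type_sym[OF SSub.prems(7)] SSub.prems(6)]
    by auto
next
  case (SEdge i j)
  have ij: "i < K" "j < K"
    using SEdge.prems(2) by auto
  note edge = same_type_edge_below[OF _ _ two_le_threshold ij at_height_root at_height_root]
  show ?case
    unfolding leaf_ssat_SEdge_iff[OF SEdge.prems(5)] leaf_ssat_SEdge_iff[OF SEdge.prems(6)]
    using edge[OF SEdge.prems(3,4,3,4,7)] edge[OF SEdge.prems(4,3,4,3) same_type_sym[OF SEdge.prems(7)]]
    by blast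
next
  case (SNeg p)
  then show ?case
    by simp
next
  case (SConj p1 p2)
  have "leaf_ssat S N1 \<tau>1 p1 \<longleftrightarrow> leaf_ssat S N2 \<tau>2 p1"
    by (rule SConj.IH(1)) (use SConj.prems in auto)
  moreover have "leaf_ssat S N1 \<tau>1 p2 \<longleftrightarrow> leaf_ssat S N2 \<tau>2 p2"
    by (rule SConj.IH(2)) (use SConj.prems in auto)
  ultimately show ?case
    by simp
next
  case (SEx i p)
  obtain q' where q: "q = Suc q'" "srank p \<le> q'"
    using SEx.prems(1) by (cases q) auto
  have "svars p \<subseteq> {..<K}"
    using SEx.prems(2) by simp
  then have IH: "leaf_ssat S N1' \<tau>1' p \<longleftrightarrow> leaf_ssat S N2' \<tau>2' p"
    if "wf_tree N1'" "wf_tree N2'" "\<And>j. \<tau>1' j \<subseteq> leaves_under N1' d rt" "\<And>j. \<tau>2' j \<subseteq> leaves_under N2' d rt"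
      "same_type (threshold q') d ((N1', \<tau>1'), rt) ((N2', \<tau>2'), rt)" for N1' N2' \<tau>1' \<tau>2'
    using SEx.IH[OF q(2) _ that] by blast
  have move: "leaf_ssat S N2' \<tau>2' (SEx i p)"
    if "wf_tree N1'" "wf_tree N2'" "\<And>j. \<tau>1' j \<subseteq> leaves_under N1' d rt" "\<And>j. \<tau>2' j \<subseteq> leaves_under N2' d rt"
      "same_type (threshold (Suc q')) d ((N1', \<tau>1'), rt) ((N2', \<tau>2'), rt)" "leaf_ssat S N1' \<tau>1' (SEx i p)"
    for N1' N2' \<tau>1' \<tau>2'
    by (rule same_type_leaf_ssat_SEx[OF _ that]) (rule IH)
  show ?case
    using move[OF SEx.prems(3-7)[unfolded q]]
      move[OF SEx.prems(4,3,6,5) same_type_sym[OF SEx.prems(7)[unfolded q]]] by blast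
qed

lemma exists_finite_subtree_leaf_ssat_iff:
  assumes "wf_tree N" "svars p \<subseteq> {..<K}"
  shows "\<exists>N' \<subseteq> N. finite N' \<and> wf_tree N' \<and> (leaf_ssat S N (\<lambda>_. {}) p \<longleftrightarrow> leaf_ssat S N' (\<lambda>_. {}) p)"
proof -
  have "1 \<le> threshold (srank p)"
    using two_le_threshold[of "srank p"] by simp
  then obtain N' where N': "N' \<subseteq> N" "finite N'" "wf_tree N'"
      "same_type (threshold (srank p)) d ((N, \<lambda>_. {}), rt) ((N', \<lambda>_. {}), rt)"
    using exists_finite_subtree_same_type[OF assms(1)] by blast
  then show ?thesis
    using same_type_leaf_ssat_iff[OF order_refl assms(2) assms(1) N'(3) _ _ N'(4)] by auto
qed

section \<open>Tree models\<close>

lemma tm_leaf_iff_children: "tm_leaf N rt par v \<longleftrightarrow> v \<in> N \<and> children N v = {}"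
  by (auto simp: tm_leaf_def tm_child_def children_def)

lemma children_eq_empty_iff:
  assumes "wf_tree N" "v \<in> N"
  shows "children N v = {} \<longleftrightarrow> dep v = d"
proof
  assume "children N v = {}"
  then have "\<not> dep v < d"
    using wf_treeD(6)[OF assms] by blast
  then show "dep v = d"
    using wf_treeD(5)[OF assms] by simp
next
  assume "dep v = d"
  then show "children N v = {}"
    using wf_treeD(5)[OF assms(1)] in_childrenD(1,4)[OF assms(1)] by (metis Suc_n_not_le_n all_not_in_conv)
qed

lemma tm_leaf_iff:
  assumes "wf_tree N"
  shows "tm_leaf N rt par v \<longleftrightarrow> v \<in> N \<and> dep v = d"
proof -
  have "tm_leaf N rt par v \<longleftrightarrow> v \<in> N \<and> children N v = {}"
    by (rule tm_leaf_iff_children)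
  also have "\<dots> \<longleftrightarrow> v \<in> N \<and> dep v = d"
    using children_eq_empty_iff[OF assms] by blast
  finally show ?thesis .
qed

lemma tm_leaves_eq: "wf_tree N \<Longrightarrow> tm_leaves N rt par = leaves_under N d rt"
  using tm_leaf_iff leaves_under_root unfolding tm_leaves_def by auto

lemma wf_tree_if_tree_model:
  assumes tm: "is_tree_model r d N rt par dep lab S"
  shows "wf_tree N"
  unfolding wf_tree_def
proof (intro conjI ballI impI)
  show "rt \<in> N" "dep rt = 0"
    using tm by (simp_all add: is_tree_model_def)
next
  fix v assume v: "v \<in> N"
  show "dep v \<le> d"
    using tm v by (simp add: is_tree_model_def)
  show "v \<noteq> rt \<Longrightarrow> par v \<in> N" "v \<noteq> rt \<Longrightarrow> dep v = Suc (dep (par v))"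
    using tm v by (simp_all add: is_tree_model_def)
  show "children N v \<noteq> {}" if "dep v < d"
  proof
    assume "children N v = {}"
    then have "tm_leaf N rt par v"
      using v tm_leaf_iff_children by blast
    then show False
      using tm that by (simp add: is_tree_model_def)
  qed
  assume "dep v = d"
  have "w \<notin> children N v" for w
  proof
    assume "w \<in> children N v"
    then have "w \<in> N" "w \<noteq> rt" "par w = v"
      by (simp_all add: children_def)
    then have "dep w = Suc (dep v)" "dep w \<le> d"
      using tm by (auto simp: is_tree_model_def)
    then show False
      using \<open>dep v = d\<close> by simp
  qed
  then have "children N v = {}"
    by blast
  then show "lab v \<le> r"
    using tm v tm_leaf_iff_children by (auto simp: is_tree_model_def)
qed

lemma tree_model_subtree:
  assumes tm: "is_tree_model r d N rt par dep lab S" and sub: "N' \<subseteq> N" and wf': "wf_tree N'"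
  shows "is_tree_model r d N' rt par dep lab S"
proof -
  have wf: "wf_tree N"
    using wf_tree_if_tree_model[OF tm] .
  have leaf: "tm_leaf N' rt par v \<longleftrightarrow> v \<in> N' \<and> tm_leaf N rt par v" for v
    using tm_leaf_iff[OF wf] tm_leaf_iff[OF wf'] sub by blast
  have "\<forall>v. tm_leaf N' rt par v \<longrightarrow> dep v = d \<and> lab v \<in> {1..r}"
  proof (intro allI impI)
    fix v assume "tm_leaf N' rt par v"
    then have "tm_leaf N rt par v"
      using leaf by blast
    then show "dep v = d \<and> lab v \<in> {1..r}"
      using tm by (simp add: is_tree_model_def)
  qed
  moreover have "\<forall>v\<in>N'. \<not> tm_leaf N' rt par v \<longrightarrow> lab v = r + 1"
  proof (intro ballI impI)
    fix v assume "v \<in> N'" "\<not> tm_leaf N' rt par v"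
    then have "v \<in> N" "\<not> tm_leaf N rt par v"
      using leaf sub by blast+
    then show "lab v = r + 1"
      using tm by (simp add: is_tree_model_def)
  qed
  moreover have "\<forall>v\<in>N'. v \<noteq> rt \<longrightarrow> par v \<in> N' \<and> dep v = Suc (dep (par v))"
    using wf_treeD(3,4)[OF wf'] by blast
  moreover have "rt \<in> N'" "\<forall>v\<in>N'. dep v \<le> d"
    using wf_treeD(1,5)[OF wf'] by blast+
  ultimately show ?thesis
    using tm unfolding is_tree_model_def by blast
qed

lemma holds_iff_leaf_ssat:
  assumes "wf_tree N" "mso_sentence p" "bij_betw f (tm_leaves N rt par) V"
    and "\<forall>u \<in> tm_leaves N rt par. \<forall>v \<in> tm_leaves N rt par. E (f u) (f v) \<longleftrightarrow> tm_adj par lab S u v"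
  shows "holds V E p \<longleftrightarrow> leaf_ssat S N (\<lambda>_. {}) (to_sform p)"
proof -
  have "holds V E p \<longleftrightarrow> ssat V E (\<lambda>_. {}) (to_sform p)"
    by (rule holds_iff_ssat[OF assms(2)])
  also have "\<dots> \<longleftrightarrow> leaf_ssat S N (\<lambda>_. {}) (to_sform p)"
    using ssat_bij[OF assms(3,4), of "\<lambda>_. {}"] tm_leaves_eq[OF assms(1)] by simp
  finally show ?thesis .
qed

end

lemma in_TM_finite_equivalent:
  fixes V :: "'a set"
  assumes "in_TM r d V E" "mso_sentence p"
  shows "\<exists>(V' :: 'a set) E'. in_TM r d V' E' \<and> finite V' \<and> (holds V E p \<longleftrightarrow> holds V' E' p)"
proof -
  obtain N :: "('a \<times> nat) set" and rt par dep lab S f where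
    tm: "is_tree_model r d N rt par dep lab S" and f: "bij_betw f (tm_leaves N rt par) V" and
    adj: "\<forall>u \<in> tm_leaves N rt par. \<forall>v \<in> tm_leaves N rt par. E (f u) (f v) \<longleftrightarrow> tm_adj par lab S u v"
    using assms(1) unfolding in_TM_def by blast
  obtain K where "\<forall>n \<in> svars (to_sform p). n < K"
    using finite_svars finite_nat_set_iff_bounded by blast
  then have K: "svars (to_sform p) \<subseteq> {..<K}"
    by auto
  interpret labelled_tree par rt dep lab d r K .
  have wf: "wf_tree N"
    using wf_tree_if_tree_model[OF tm] .
  obtain N' where N': "N' \<subseteq> N" "finite N'" "wf_tree N'"
      "leaf_ssat S N (\<lambda>_. {}) (to_sform p) \<longleftrightarrow> leaf_ssat S N' (\<lambda>_. {}) (to_sform p)"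
    using exists_finite_subtree_leaf_ssat_iff[OF wf K] by blast
  let ?L = "tm_leaves N rt par" and ?L' = "tm_leaves N' rt par"
  define V' where "V' = f ` ?L'"
  define E' where "E' x y \<longleftrightarrow> E x y \<and> x \<in> V' \<and> y \<in> V'" for x y
  have L'L: "?L' \<subseteq> ?L"
    using N'(1) tm_leaves_eq[OF wf] tm_leaves_eq[OF N'(3)] by (auto simp: leaves_under_def)
  then have f': "bij_betw f ?L' V'"
    unfolding V'_def using f by (meson bij_betw_imp_inj_on inj_on_imp_bij_betw inj_on_subset)
  have adj': "\<forall>u \<in> ?L'. \<forall>v \<in> ?L'. E' (f u) (f v) \<longleftrightarrow> tm_adj par lab S u v"
    using adj L'L by (auto simp: E'_def V'_def)
  have "in_TM r d V' E'"
    unfolding in_TM_def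
  proof (intro conjI exI)
    show "is_graph V' E'"
      using assms(1) by (auto simp: in_TM_def is_graph_def E'_def)
  qed (use tree_model_subtree[OF tm N'(1,3)] f' adj' in auto)
  moreover have "finite V'"
    using N'(2) tm_leaves_eq[OF N'(3)] by (simp add: V'_def leaves_under_def)
  moreover have "holds V E p \<longleftrightarrow> holds V' E' p"
    using holds_iff_leaf_ssat[OF wf assms(2) f adj] holds_iff_leaf_ssat[OF N'(3) assms(2) f' adj'] N'(4)
    by simp
  ultimately show ?thesis
    by blast
qed

theorem corollary10:
  fixes r d :: nat
  shows "(\<forall>p. fo_sentence p \<longrightarrow>
            ((\<forall>(V :: 'a set) E. in_TM r d V E \<and> finite V \<longrightarrow> holds V E p) \<longleftrightarrow>
             (\<forall>(V :: 'a set) E. in_TM r d V E \<longrightarrow> holds V E p))) \<and>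
         (\<forall>p. mso_sentence p \<longrightarrow>
            ((\<forall>(V :: 'a set) E. in_TM r d V E \<and> finite V \<longrightarrow> holds V E p) \<longleftrightarrow>
             (\<forall>(V :: 'a set) E. in_TM r d V E \<longrightarrow> holds V E p)))"
proof -
  have "(\<forall>(V :: 'a set) E. in_TM r d V E \<and> finite V \<longrightarrow> holds V E p) \<longleftrightarrow>
        (\<forall>(V :: 'a set) E. in_TM r d V E \<longrightarrow> holds V E p)" if "mso_sentence p" for p
    using in_TM_finite_equivalent[OF _ that] by blast
  then show ?thesis
    unfolding fo_sentence_def by blast
qed

end
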